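(* Let $\mu$ be an invariant probability measure of the unperturbed transition probability function $P$. Then there exists a transition probability function $\Pi$ on $\mathcal{Z}\times\mathfrak{B}(\mathcal{Z})$ such that: (a) for $\mu$-a.e. $z\in\mathcal{Z}$, $\Pi(z,\cdot)$ is an invariant probability measure for $P$; (b) for all $f\in\mathcal{C}_b(\mathcal{Z})$, $\lim_{t\to\infty}\|P^tf-\Pi f\|_\infty=0$; (c) $\mu$ is an invariant probability measure for $\Pi$; (d) for all $z\in\mathcal{Z}$, the support of $\Pi(z,\cdot)$ is contained in the set $\mathcal{S}$ of pure strategy states.
   Context: Finite game: players $\mathcal{I}=\{1,\dots,n\}$, finite action sets $\mathcal{A}_i$, $\mathcal{A}=\prod_i\mathcal{A}_i$, utilities $u_i:\mathcal{A}\to\mathbb{R}$ with $u_i(\alpha)>0$ for all $i,\alpha$. $\mathcal{X}_i=\Delta(|\mathcal{A}_i|)$ (actions identified with unit vectors $e_{\alpha_i}$), $\mathcal{Z}=\mathcal{A}\times\prod_i\mathcal{X}_i$ with the product of the discrete and Euclidean topologies; $\mathfrak{B}(\mathcal{Z})$ its Borel $\sigma$-field; $\mathcal{C}_b(\mathcal{Z})$ the bounded continuous real functions with sup norm $\|\cdot\|_\infty$; $Pf(z)=\int P(z,dy)f(y)$. Step size $\epsilon>0$ with $0<\epsilon u_i(\alpha)<1$ for all $i,\alpha$. $P$ is the transition probability function of the unperturbed process: from $(\alpha(t),x(t))$ each agent $i$ independently draws $\alpha_i(t+1)$ according to $x_i(t)$, then $x_i(t+1)=x_i(t)+\epsilon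 u_i(\alpha(t+1))(e_{\alpha_i(t+1)}-x_i(t))$; $P^t$ is its $t$-step kernel. A pure strategy state is $(\alpha,x)$ with $x_i=e_{\alpha_i}$ for all $i$; $\mathcal{S}$ is the set of these. The support of a measure is the smallest closed set of full measure. *)

theory Defs
  imports "HOL-Probability.Probability"
begin

(* Actions: a finite type 'a; player i's action set is A i \<subseteq> UNIV.
   Actions are identified with unit vectors e_k = axis k 1 in real^'a (as in the paper).
   A state z = (a, x) lives in the Euclidean space (real^'a)^'i \<times> (real^'a)^'i;
   a $ i = e_{alpha_i}, x $ i \<in> simplex of A i. *)

type_synonym ('i,'a) state = "((real^'a)^'i) \<times> ((real^'a)^'i)"

definition simplex_on :: "'a set \<Rightarrow> (real^'a) set" where
  "simplex_on B = {v. (\<forall>k. 0 \<le> v $ k) \<and> (\<forall>k. k \<notin> B \<longrightarrow> v $ k = 0) \<and> (\<Sum>k\<in>UNIV. v $ k) = 1}"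

definition actvec :: "('i \<Rightarrow> 'a) \<Rightarrow> (real^'a)^'i" where
  "actvec \<alpha> = (\<chi> i. axis (\<alpha> i) 1)"

definition Zset :: "('i::finite \<Rightarrow> 'a::finite set) \<Rightarrow> ('i,'a) state set" where
  "Zset A = {(a, x). (\<exists>\<alpha>. (\<forall>i. \<alpha> i \<in> A i) \<and> a = actvec \<alpha>) \<and> (\<forall>i. x $ i \<in> simplex_on (A i))}"

(* Z with its Borel sigma-field (subspace topology = discrete \<times> Euclidean) *)
definition Zm :: "('i::finite \<Rightarrow> 'a::finite set) \<Rightarrow> ('i,'a) state measure" where
  "Zm A = restrict_space borel (Zset A)"

definition pure_states :: "('i::finite \<Rightarrow> 'a::finite set) \<Rightarrow> ('i,'a) state set" where
  "pure_states A = {z \<in> Zset A. snd z = fst z}"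

definition prof_pmf :: "(real^'a::finite)^'i::finite \<Rightarrow> ('i \<Rightarrow> 'a) pmf" where
  "prof_pmf x = embed_pmf (\<lambda>\<alpha>. \<Prod>i\<in>UNIV. x $ i $ (\<alpha> i))"

definition next_state ::
  "('i::finite \<Rightarrow> ('i \<Rightarrow> 'a::finite) \<Rightarrow> real) \<Rightarrow> real \<Rightarrow> ('i,'a) state \<Rightarrow> ('i \<Rightarrow> 'a) \<Rightarrow> ('i,'a) state" where
  "next_state u \<epsilon> z \<alpha>' =
     (actvec \<alpha>', \<chi> i. snd z $ i + (\<epsilon> * u i \<alpha>') *\<^sub>R (axis (\<alpha>' i) 1 - snd z $ i))"

definition Pker ::
  "('i::finite \<Rightarrow> 'a::finite set) \<Rightarrow> ('i \<Rightarrow> ('i \<Rightarrow> 'a) \<Rightarrow> real) \<Rightarrow> real \<Rightarrow> ('i,'a) state \<Rightarrow> ('i,'a) state measure" where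
  "Pker A u \<epsilon> z = distr (measure_pmf (prof_pmf (snd z))) (Zm A) (next_state u \<epsilon> z)"

primrec Pstep ::
  "('i::finite \<Rightarrow> 'a::finite set) \<Rightarrow> ('i \<Rightarrow> ('i \<Rightarrow> 'a) \<Rightarrow> real) \<Rightarrow> real \<Rightarrow> nat \<Rightarrow> ('i,'a) state \<Rightarrow> ('i,'a) state measure" where
  "Pstep A u \<epsilon> 0 z = return (Zm A) z"
| "Pstep A u \<epsilon> (Suc t) z = bind (Pstep A u \<epsilon> t z) (Pker A u \<epsilon>)"

definition kernel_apply :: "('b \<Rightarrow> 'b measure) \<Rightarrow> ('b \<Rightarrow> real) \<Rightarrow> 'b \<Rightarrow> real" where
  "kernel_apply K f z = (\<integral>y. f y \<partial>(K z))"

definition invariant_prob :: "'b measure \<Rightarrow> ('b \<Rightarrow> 'b measure) \<Rightarrow> 'b measure \<Rightarrow> bool" where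
  "invariant_prob M K \<mu> \<longleftrightarrow> \<mu> \<in> space (prob_algebra M) \<and>
     (\<forall>B\<in>sets M. emeasure \<mu> B = (\<integral>\<^sup>+ z. emeasure (K z) B \<partial>\<mu>))"

definition support_on :: "'b::topological_space set \<Rightarrow> 'b measure \<Rightarrow> 'b set" where
  "support_on S \<nu> = \<Inter>{C. closedin (top_of_set S) C \<and> emeasure \<nu> (S - C) = 0}"

end

(* Write P g z = \<Sum>\<beta>. p_z(\<beta>) g (z_\<beta>) for the one-step operator, where p_z(\<beta>) is the probability
   of drawing profile \<beta> and z_\<beta> the resulting state. For a profile \<alpha> the defect
   d_\<alpha>(z) = \<Sum>i. 1 - x_i(\<alpha>_i) satisfies 1 - p_z(\<alpha>) \<le> d_\<alpha>(z), and playing \<alpha> multiplies it by at most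
   some rate < 1. Hence from any state the same profile is repeated long enough, with probability
   bounded below, to bring the state close to a pure state, and from there the orbit escapes only
   with probability O(d_\<alpha>). A renewal argument shows that P^t of the indicator of the states far
   from all pure states tends to 0 uniformly. Since pure states are absorbing, P^t f is then
   uniformly Cauchy for bounded continuous f, with limit \<Sum>\<alpha>. f(pure \<alpha>) \<pi>_\<alpha>(z), where \<pi>_\<alpha> is the
   limit of P^t p_(\<alpha>); the kernel \<Pi>(z) = \<Sum>\<alpha>. \<pi>_\<alpha>(z) \<delta>_(pure \<alpha>) has the required properties.
   An invariant \<mu> gives no mass to the states far from pure states, so it lives on the pure
   states, where \<Pi> is the identity; this makes \<mu> invariant for \<Pi>. *)

theory Submission
  imports Defs
begin

lemma prod_ge_one_minus_sum:
  fixes a :: "'k \<Rightarrow> real"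
  assumes "finite I" "\<And>i. i \<in> I \<Longrightarrow> 0 \<le> a i \<and> a i \<le> 1"
  shows "1 - (\<Sum>i\<in>I. 1 - a i) \<le> (\<Prod>i\<in>I. a i)"
  using assms
proof (induction I rule: finite_induct)
  case (insert x F)
  have IH: "1 - (\<Sum>i\<in>F. 1 - a i) \<le> (\<Prod>i\<in>F. a i)" using insert by auto
  have ax: "0 \<le> a x" "a x \<le> 1" using insert by auto
  have P: "0 \<le> (\<Prod>i\<in>F. a i)" "(\<Prod>i\<in>F. a i) \<le> 1"
    using insert by (auto intro: prod_nonneg prod_le_1)
  have "1 - (\<Sum>i\<in>insert x F. 1 - a i) \<le> (\<Prod>i\<in>F. a i) - (1 - a x)"
    using insert IH by simp
  also have "\<dots> \<le> a x * (\<Prod>i\<in>F. a i)"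
    using mult_nonneg_nonneg[of "1 - a x" "1 - (\<Prod>i\<in>F. a i)"] ax P by (simp add: algebra_simps)
  finally show ?case using insert by simp
qed simp

lemma finite_ex_pos_common:
  fixes P :: "'k \<Rightarrow> real \<Rightarrow> bool"
  assumes "finite S" "\<And>x. x \<in> S \<Longrightarrow> \<exists>d>0. P x d"
    and downward: "\<And>x d d'. P x d \<Longrightarrow> 0 < d' \<Longrightarrow> d' \<le> d \<Longrightarrow> P x d'"
  shows "\<exists>d>0. \<forall>x\<in>S. P x d"
  using assms(1,2)
proof (induction S rule: finite_induct)
  case (insert a S)
  obtain d1 where "d1 > 0" "\<forall>x\<in>S. P x d1" using insert by auto
  moreover obtain d2 where "d2 > 0" "P a d2" using insert by auto
  ultimately show ?case by (intro exI[of _ "min d1 d2"]) (auto intro: downward)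
qed (auto intro: exI[of _ 1])

lemma uniform_limit_sum:
  fixes f :: "'i \<Rightarrow> 'n \<Rightarrow> 'a \<Rightarrow> 'b::real_normed_vector"
  assumes "finite I" "\<And>i. i \<in> I \<Longrightarrow> uniform_limit X (f i) (l i) F"
  shows "uniform_limit X (\<lambda>n x. \<Sum>i\<in>I. f i n x) (\<lambda>x. \<Sum>i\<in>I. l i x) F"
  using assms by (induction I rule: finite_induct) (auto intro!: uniform_limit_intros)

lemma uniform_limit_SUP_abs_diff:
  fixes f :: "nat \<Rightarrow> 'a \<Rightarrow> real"
  assumes lim: "uniform_limit S f l sequentially" and S: "S \<noteq> {}"
  shows "(\<lambda>t. SUP x\<in>S. \<bar>f t x - l x\<bar>) \<longlonglongrightarrow> 0"
proof (rule LIMSEQ_I)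
  fix r :: real assume r: "0 < r"
  obtain N where N: "\<And>t x. t \<ge> N \<Longrightarrow> x \<in> S \<Longrightarrow> \<bar>f t x - l x\<bar> < r / 2"
    using lim[unfolded uniform_limit_sequentially_iff, rule_format, of "r / 2"] r
    by (auto simp: dist_real_def)
  have "norm ((SUP x\<in>S. \<bar>f t x - l x\<bar>) - 0) < r" if "t \<ge> N" for t
  proof -
    have "(SUP x\<in>S. \<bar>f t x - l x\<bar>) \<le> r / 2"
      using S N[OF that] by (intro cSUP_least) (auto intro: less_imp_le)
    moreover have "0 \<le> (SUP x\<in>S. \<bar>f t x - l x\<bar>)"
      using S N[OF that]
      by (intro cSUP_upper2[where x="SOME x. x \<in> S"] bdd_aboveI2[where M="r/2"])
         (auto intro: less_imp_le someI_ex)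
    ultimately show ?thesis using r by simp
  qed
  then show "\<exists>N. \<forall>t\<ge>N. norm ((SUP x\<in>S. \<bar>f t x - l x\<bar>) - 0) < r" by blast
qed

section \<open>Markov operators\<close>

locale markov_operator =
  fixes S :: "'s set" and T :: "('s \<Rightarrow> real) \<Rightarrow> 's \<Rightarrow> real"
  assumes op_linear: "T (\<lambda>y. a * g y + b * h y) z = a * T g z + b * T h z"
    and op_mono: "z \<in> S \<Longrightarrow> (\<And>y. y \<in> S \<Longrightarrow> g y \<le> h y) \<Longrightarrow> T g z \<le> T h z"
    and op_const: "z \<in> S \<Longrightarrow> T (\<lambda>_. c) z = c"
begin

lemma op_cong: "z \<in> S \<Longrightarrow> (\<And>y. y \<in> S \<Longrightarrow> g y = h y) \<Longrightarrow> T g z = T h z"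
  by (intro order_antisym op_mono) auto

lemma op_scale: "T (\<lambda>y. a * g y) z = a * T g z"
  using op_linear[of a g 0 g z] by simp

lemma op_diff: "T (\<lambda>y. g y - h y) z = T g z - T h z"
  using op_linear[of 1 g "-1" h z] by simp

lemma op_add: "T (\<lambda>y. g y + h y) z = T g z + T h z"
  using op_linear[of 1 g 1 h z] by simp

lemma op_affine: "z \<in> S \<Longrightarrow> T (\<lambda>y. a * g y + b) z = a * T g z + b"
  using op_linear[of a g b "\<lambda>_. 1" z] op_const[of z 1] by simp

lemma op_sum: "finite I \<Longrightarrow> T (\<lambda>y. \<Sum>i\<in>I. g i y) z = (\<Sum>i\<in>I. T (g i) z)"
proof (induction I rule: finite_induct)
  case empty
  show ?case using op_scale[of 0 "\<lambda>_. 0" z] by simp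
next
  case (insert i I)
  then show ?case using op_linear[of 1 "g i" 1 "\<lambda>y. \<Sum>i\<in>I. g i y" z] by simp
qed

lemma op_lower: "z \<in> S \<Longrightarrow> (\<And>y. y \<in> S \<Longrightarrow> lo \<le> g y) \<Longrightarrow> lo \<le> T g z"
  using op_mono[of z "\<lambda>_. lo" g] op_const[of z lo] by simp

lemma op_upper: "z \<in> S \<Longrightarrow> (\<And>y. y \<in> S \<Longrightarrow> g y \<le> hi) \<Longrightarrow> T g z \<le> hi"
  using op_mono[of z g "\<lambda>_. hi"] op_const[of z hi] by simp

lemma op_abs:
  assumes "z \<in> S" shows "\<bar>T g z\<bar> \<le> T (\<lambda>y. \<bar>g y\<bar>) z"
proof -
  have "T g z \<le> T (\<lambda>y. \<bar>g y\<bar>) z" "T (\<lambda>y. - 1 * \<bar>g y\<bar>) z \<le> T g z"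
    using assms by (auto intro: op_mono)
  then show ?thesis using op_scale[of "- 1" "\<lambda>y. \<bar>g y\<bar>" z] by linarith
qed

lemma op_indicator_bounds: "z \<in> S \<Longrightarrow> 0 \<le> T (indicator B) z \<and> T (indicator B) z \<le> 1"
  by (intro conjI op_lower op_upper) (auto simp: indicator_def)

lemma op_indicator_compl:
  assumes "z \<in> S" "B \<subseteq> S"
  shows "T (indicator B) z = 1 - T (indicator (S - B)) z"
proof -
  have "T (indicator B) z = T (\<lambda>y. - 1 * indicator (S - B) y + 1) z"
    using assms by (intro op_cong) (auto simp: indicator_def)
  then show ?thesis using op_affine[OF assms(1), of "- 1" "indicator (S - B)" 1] by simp
qed

lemma markov_operator_funpow: "markov_operator S (T ^^ t)"
proof (induction t)
  case 0
  show ?case by unfold_locales simp_all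
next
  case (Suc t)
  interpret iter: markov_operator S "T ^^ t" by (rule Suc)
  show ?case
  proof unfold_locales
    show "(T ^^ Suc t) (\<lambda>y. a * g y + b * h y) z = a * (T ^^ Suc t) g z + b * (T ^^ Suc t) h z"
      for a g b h z by (simp add: iter.op_linear[abs_def] op_linear)
    show "(T ^^ Suc t) g z \<le> (T ^^ Suc t) h z"
      if "z \<in> S" "\<And>y. y \<in> S \<Longrightarrow> g y \<le> h y" for z g h
      using that by (simp add: op_mono iter.op_mono)
    show "(T ^^ Suc t) (\<lambda>_. c) z = c" if "z \<in> S" for z c
      using that op_cong[of z "(T ^^ t) (\<lambda>_. c)" "\<lambda>_. c"] iter.op_const op_const by simp
  qed
qed

lemmas iter_const = markov_operator.op_const[OF markov_operator_funpow]
lemmas iter_add = markov_operator.op_add[OF markov_operator_funpow]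
lemmas iter_cong = markov_operator.op_cong[OF markov_operator_funpow]
lemmas iter_scale = markov_operator.op_scale[OF markov_operator_funpow]
lemmas iter_diff = markov_operator.op_diff[OF markov_operator_funpow]
lemmas iter_affine = markov_operator.op_affine[OF markov_operator_funpow]
lemmas iter_sum = markov_operator.op_sum[OF markov_operator_funpow]
lemmas iter_mono = markov_operator.op_mono[OF markov_operator_funpow]
lemmas iter_lower = markov_operator.op_lower[OF markov_operator_funpow]
lemmas iter_upper = markov_operator.op_upper[OF markov_operator_funpow]
lemmas iter_abs = markov_operator.op_abs[OF markov_operator_funpow]
lemmas iter_indicator_bounds = markov_operator.op_indicator_bounds[OF markov_operator_funpow]
lemmas iter_indicator_compl = markov_operator.op_indicator_compl[OF markov_operator_funpow]

(* Every M steps the orbit enters some N i with probability at least \<delta>, and from there g stays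
   below e; the failed attempts contribute the geometric tail (1 - \<delta>) ^ k. *)
lemma renewal_bound:
  assumes g: "\<And>y. y \<in> S \<Longrightarrow> 0 \<le> g y \<and> g y \<le> 1"
    and N: "\<And>i. i \<in> I \<Longrightarrow> N i \<subseteq> S"
    and reach: "\<And>z. z \<in> S \<Longrightarrow> \<exists>i\<in>I. \<delta> \<le> (T ^^ M) (indicator (N i)) z"
    and stay: "\<And>i s y. i \<in> I \<Longrightarrow> y \<in> N i \<Longrightarrow> (T ^^ s) g y \<le> e"
    and \<delta>: "0 < \<delta>" "\<delta> \<le> 1" and e: "0 \<le> e"
  shows "z \<in> S \<Longrightarrow> (T ^^ (s + k * M)) g z \<le> e / \<delta> + (1 - \<delta>) ^ k"
proof (induction k arbitrary: s z)
  case 0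
  have "(T ^^ s) g z \<le> 1" using g by (intro iter_upper[OF 0]) auto
  moreover have "0 \<le> e / \<delta>" using \<delta> e by simp
  ultimately show ?case by simp
next
  case (Suc k)
  define c where "c = e / \<delta> + (1 - \<delta>) ^ k"
  have c: "0 \<le> c" using \<delta> e unfolding c_def by simp
  obtain i where i: "i \<in> I" and w: "\<delta> \<le> (T ^^ M) (indicator (N i)) z"
    using reach[OF Suc.prems] by blast
  define h where "h = (T ^^ (s + k * M)) g"
  have "h y \<le> c * indicator (S - N i) y + e" if "y \<in> S" for y
  proof (cases "y \<in> N i")
    case True
    then show ?thesis using stay[OF i True] unfolding h_def by simp
  next
    case False
    then show ?thesis using Suc.IH[OF that, of s] e that unfolding h_def c_def by simp
  qed
  then have "(T ^^ M) h z \<le> (T ^^ M) (\<lambda>y. c * indicator (S - N i) y + e) z"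
    by (intro iter_mono[OF Suc.prems])
  also have "\<dots> = c * (1 - (T ^^ M) (indicator (N i)) z) + e"
    using iter_affine[OF Suc.prems] iter_indicator_compl[OF Suc.prems N[OF i]] by simp
  also have "\<dots> \<le> c * (1 - \<delta>) + e"
    using w c by (simp add: mult_left_mono)
  also have "\<dots> = e / \<delta> + (1 - \<delta>) ^ Suc k"
    using \<delta> unfolding c_def by (simp add: field_simps)
  finally show ?case
    unfolding h_def by (simp add: funpow_add add.commute add.left_commute)
qed

end

section \<open>Image measures of finitely supported distributions\<close>

lemma
  fixes p :: "'b pmf"
  assumes h: "h \<in> measure_pmf p \<rightarrow>\<^sub>M N" and I: "finite I" "set_pmf p \<subseteq> I"
  shows nn_integral_distr_pmf_finite: "g \<in> borel_measurable N \<Longrightarrow>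
      (\<integral>\<^sup>+y. g y \<partial>distr (measure_pmf p) N h) = (\<Sum>i\<in>I. g (h i) * ennreal (pmf p i))"
    and integral_distr_pmf_finite: "f \<in> borel_measurable N \<Longrightarrow>
      (\<integral>y. f y \<partial>distr (measure_pmf p) N h) = (\<Sum>i\<in>I. pmf p i * f (h i))"
    and emeasure_distr_pmf_finite: "B \<in> sets N \<Longrightarrow>
      emeasure (distr (measure_pmf p) N h) B = (\<Sum>i\<in>I. indicator B (h i) * ennreal (pmf p i))"
proof -
  show nn: "(\<integral>\<^sup>+y. g y \<partial>distr (measure_pmf p) N h) = (\<Sum>i\<in>I. g (h i) * ennreal (pmf p i))"
    if "g \<in> borel_measurable N" for g
  proof -
    have "(\<integral>\<^sup>+y. g y \<partial>distr (measure_pmf p) N h) = (\<integral>\<^sup>+i. g (h i) \<partial>measure_pmf p)"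
      by (rule nn_integral_distr[OF h]) (use that in simp)
    also have "\<dots> = (\<Sum>i\<in>I. g (h i) * ennreal (pmf p i))"
      using I by (intro nn_integral_measure_pmf_support) auto
    finally show ?thesis .
  qed
  show "(\<integral>y. f y \<partial>distr (measure_pmf p) N h) = (\<Sum>i\<in>I. pmf p i * f (h i))"
    if "f \<in> borel_measurable N" for f :: "_ \<Rightarrow> real"
    using I by (subst integral_distr[OF h that], subst integral_measure_pmf[OF I(1)]) auto
  show "emeasure (distr (measure_pmf p) N h) B = (\<Sum>i\<in>I. indicator B (h i) * ennreal (pmf p i))"
    if "B \<in> sets N" for B
    using nn[of "indicator B"] that by simp
qed

lemma measurable_distr_pmf_finite:
  assumes I: "finite I"
    and h: "\<And>x. x \<in> space M \<Longrightarrow> h x \<in> measure_pmf (p x) \<rightarrow>\<^sub>M N"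
    and supp: "\<And>x. x \<in> space M \<Longrightarrow> set_pmf (p x) \<subseteq> I"
    and hm: "\<And>i. i \<in> I \<Longrightarrow> (\<lambda>x. h x i) \<in> M \<rightarrow>\<^sub>M N"
    and pm: "\<And>i. i \<in> I \<Longrightarrow> (\<lambda>x. pmf (p x) i) \<in> borel_measurable M"
  shows "(\<lambda>x. distr (measure_pmf (p x)) N (h x)) \<in> M \<rightarrow>\<^sub>M prob_algebra N"
proof (rule measurable_prob_algebraI)
  show "prob_space (distr (measure_pmf (p x)) N (h x))" if "x \<in> space M" for x
    using h[OF that] by (rule measure_pmf.prob_space_distr)
  then show "(\<lambda>x. distr (measure_pmf (p x)) N (h x)) \<in> M \<rightarrow>\<^sub>M subprob_algebra N"
  proof (intro measurable_subprob_algebra)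
    fix B assume B: "B \<in> sets N"
    have "(\<lambda>x. \<Sum>i\<in>I. indicator B (h x i) * ennreal (pmf (p x) i)) \<in> borel_measurable M"
      using hm pm B by (intro borel_measurable_sum borel_measurable_times_ennreal
          measurable_compose[OF hm borel_measurable_indicator] measurable_ennreal) auto
    then show "(\<lambda>x. emeasure (distr (measure_pmf (p x)) N (h x)) B) \<in> borel_measurable M"
      by (rule measurable_cong[THEN iffD1, rotated])
         (simp add: emeasure_distr_pmf_finite[OF h I supp B])
  qed (auto simp: prob_space_imp_subprob_space)
qed

lemma invariant_prob_nn_integral:
  assumes inv: "invariant_prob M K \<mu>" and K: "K \<in> M \<rightarrow>\<^sub>M subprob_algebra M"
    and g: "g \<in> borel_measurable M"
  shows "(\<integral>\<^sup>+y. g y \<partial>\<mu>) = (\<integral>\<^sup>+x. \<integral>\<^sup>+y. g y \<partial>K x \<partial>\<mu>)"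
proof -
  have \<mu>: "sets \<mu> = sets M" "prob_space \<mu>"
    using inv unfolding invariant_prob_def by (auto simp: space_prob_algebra)
  have K\<mu>: "K \<in> \<mu> \<rightarrow>\<^sub>M subprob_algebra M" using K by (simp add: measurable_cong_sets[OF \<mu>(1) refl])
  have ne: "space \<mu> \<noteq> {}" by (rule prob_space.not_empty[OF \<mu>(2)])
  have "\<mu> \<bind> K = \<mu>"
  proof (rule measure_eqI)
    have "sets (K x) = sets M" if "x \<in> space \<mu>" for x
      using measurable_space[OF K\<mu> that] by (simp add: space_subprob_algebra)
    then show sets: "sets (\<mu> \<bind> K) = sets \<mu>" using sets_bind[OF _ ne, of K M] \<mu>(1) by simp
    fix B assume "B \<in> sets (\<mu> \<bind> K)"
    then have "B \<in> sets M" using sets \<mu>(1) by simp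
    then show "emeasure (\<mu> \<bind> K) B = emeasure \<mu> B"
      using emeasure_bind[OF ne K\<mu>] inv unfolding invariant_prob_def by simp
  qed
  then show ?thesis using nn_integral_bind[OF g K\<mu>] by simp
qed

section \<open>The learning dynamics\<close>

locale learning_dynamics =
  fixes A :: "'i::finite \<Rightarrow> 'a::finite set"
    and u :: "'i \<Rightarrow> ('i \<Rightarrow> 'a) \<Rightarrow> real"
    and \<epsilon> :: real
  assumes A_ne: "\<And>i. A i \<noteq> {}"
    and u_pos: "\<And>i \<alpha>. (\<forall>j. \<alpha> j \<in> A j) \<Longrightarrow> 0 < u i \<alpha>"
    and eps_pos: "0 < \<epsilon>"
    and eps_small: "\<And>i \<alpha>. (\<forall>j. \<alpha> j \<in> A j) \<Longrightarrow> \<epsilon> * u i \<alpha> < 1"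
begin

abbreviation "Z \<equiv> Zset A"

abbreviation "step \<equiv> next_state u \<epsilon>"

definition profiles :: "('i \<Rightarrow> 'a) set" where
  "profiles = {\<beta>. \<forall>i. \<beta> i \<in> A i}"

definition draw_prob :: "('i,'a) state \<Rightarrow> ('i \<Rightarrow> 'a) \<Rightarrow> real" where
  "draw_prob z \<beta> = (\<Prod>i\<in>UNIV. snd z $ i $ \<beta> i)"

(* The operator f \<mapsto> P f of the paper, as a finite sum over the drawn profiles (see integral_Pker). *)
definition P_op :: "(('i,'a) state \<Rightarrow> real) \<Rightarrow> ('i,'a) state \<Rightarrow> real" where
  "P_op g z = (\<Sum>\<beta>\<in>profiles. draw_prob z \<beta> * g (step z \<beta>))"

definition pure :: "('i \<Rightarrow> 'a) \<Rightarrow> ('i,'a) state" where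
  "pure \<alpha> = (actvec \<alpha>, actvec \<alpha>)"

definition defect :: "('i \<Rightarrow> 'a) \<Rightarrow> ('i,'a) state \<Rightarrow> real" where
  "defect \<alpha> z = (\<Sum>i\<in>UNIV. 1 - snd z $ i $ \<alpha> i)"

lemma finite_profiles [simp]: "finite profiles"
  by simp

lemma profiles_PiE: "profiles = PiE UNIV A"
  unfolding profiles_def PiE_def Pi_def extensional_def by auto

lemma profiles_ne: "profiles \<noteq> {}"
  using A_ne by (simp add: profiles_PiE PiE_eq_empty_iff)

lemma state_simplex:
  assumes "z \<in> Z"
  shows state_nonneg: "0 \<le> snd z $ i $ k"
    and state_outside: "k \<notin> A i \<Longrightarrow> snd z $ i $ k = 0"
    and state_sum: "(\<Sum>k\<in>UNIV. snd z $ i $ k) = 1"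
    and state_action: "\<exists>\<alpha>\<in>profiles. fst z = actvec \<alpha>"
  using assms unfolding Zset_def simplex_on_def profiles_def by auto

lemma state_le_1: assumes "z \<in> Z" shows "snd z $ i $ k \<le> 1"
  using member_le_sum[of k UNIV "\<lambda>k. snd z $ i $ k"] state_nonneg[OF assms] state_sum[OF assms]
  by simp

lemma state_sum_A: assumes "z \<in> Z" shows "(\<Sum>k\<in>A i. snd z $ i $ k) = 1"
  using sum.mono_neutral_right[of UNIV "A i" "\<lambda>k. snd z $ i $ k"] state_outside[OF assms]
    state_sum[OF assms]
  by simp

lemma draw_prob_nonneg: "z \<in> Z \<Longrightarrow> 0 \<le> draw_prob z \<beta>"
  unfolding draw_prob_def by (auto intro: prod_nonneg simp: state_nonneg)

lemma draw_prob_le_1: "z \<in> Z \<Longrightarrow> draw_prob z \<beta> \<le> 1"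
  unfolding draw_prob_def by (auto intro!: prod_le_1 simp: state_nonneg state_le_1)

lemma draw_prob_outside: assumes "z \<in> Z" "\<beta> \<notin> profiles" shows "draw_prob z \<beta> = 0"
proof -
  obtain i where "\<beta> i \<notin> A i" using assms(2) unfolding profiles_def by auto
  then show ?thesis
    using state_outside[OF assms(1)] unfolding draw_prob_def by (intro prod_zero) auto
qed

lemma draw_prob_sum: assumes "z \<in> Z" shows "(\<Sum>\<beta>\<in>profiles. draw_prob z \<beta>) = 1"
  using prod_sum_PiE[of UNIV A "\<lambda>i k. snd z $ i $ k"] state_sum_A[OF assms]
  by (simp add: draw_prob_def profiles_PiE)

lemma actvec_nth: "actvec \<alpha> $ i $ k = (if k = \<alpha> i then 1 else 0)"
  unfolding actvec_def by (simp add: axis_def)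

lemma fst_step [simp]: "fst (step z \<beta>) = actvec \<beta>"
  unfolding next_state_def by simp

lemma step_nth: "snd (step z \<beta>) $ i $ k =
   (1 - \<epsilon> * u i \<beta>) * snd z $ i $ k + \<epsilon> * u i \<beta> * (if k = \<beta> i then 1 else 0)"
  unfolding next_state_def by (simp add: axis_def algebra_simps)

lemma learning_weight: "\<beta> \<in> profiles \<Longrightarrow> 0 < \<epsilon> * u i \<beta> \<and> \<epsilon> * u i \<beta> < 1"
  using u_pos eps_small eps_pos unfolding profiles_def by auto

lemma step_in_Z: assumes z: "z \<in> Z" and b: "\<beta> \<in> profiles" shows "step z \<beta> \<in> Z"
proof -
  have c: "0 < \<epsilon> * u i \<beta>" "\<epsilon> * u i \<beta> < 1" for i using learning_weight[OF b] by auto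
  have bA: "\<beta> i \<in> A i" for i using b unfolding profiles_def by auto
  have "snd (step z \<beta>) $ i \<in> simplex_on (A i)" for i
  proof -
    have "0 \<le> snd (step z \<beta>) $ i $ k" for k
      unfolding step_nth using c[of i] state_nonneg[OF z, of i k] by auto
    moreover have "snd (step z \<beta>) $ i $ k = 0" if "k \<notin> A i" for k
      unfolding step_nth using state_outside[OF z that] bA[of i] that by auto
    moreover have "(\<Sum>k\<in>UNIV. snd (step z \<beta>) $ i $ k) = 1"
      unfolding step_nth by (simp add: sum.distrib sum_distrib_left[symmetric] state_sum[OF z])
    ultimately show ?thesis unfolding simplex_on_def by auto
  qed
  moreover have "\<exists>\<alpha>. (\<forall>i. \<alpha> i \<in> A i) \<and> fst (step z \<beta>) = actvec \<alpha>"
    using b unfolding profiles_def by auto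
  ultimately show ?thesis unfolding Zset_def by (cases "step z \<beta>") auto
qed

lemma pure_in_Z: "\<alpha> \<in> profiles \<Longrightarrow> pure \<alpha> \<in> Z"
  unfolding Zset_def pure_def simplex_on_def profiles_def by (auto simp: actvec_nth sum.delta)

lemma draw_prob_pure: "draw_prob (pure \<alpha>) \<beta> = (if \<beta> = \<alpha> then 1 else 0)"
proof (cases "\<beta> = \<alpha>")
  case False
  then obtain i where "\<beta> i \<noteq> \<alpha> i" by auto
  then have "snd (pure \<alpha>) $ i $ \<beta> i = 0" unfolding pure_def by (simp add: actvec_nth)
  then show ?thesis using False unfolding draw_prob_def by (auto intro!: prod_zero)
qed (simp add: draw_prob_def pure_def actvec_nth)

lemma step_pure: "step (pure \<alpha>) \<alpha> = pure \<alpha>"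
proof -
  have "snd (step (pure \<alpha>) \<alpha>) = actvec \<alpha>"
    by (simp add: vec_eq_iff step_nth pure_def actvec_nth algebra_simps)
  then show ?thesis unfolding pure_def by (metis fst_step prod.collapse)
qed

lemma pure_states_eq: "pure_states A = pure ` profiles"
proof
  show "pure_states A \<subseteq> pure ` profiles"
  proof
    fix z assume "z \<in> pure_states A"
    then have z: "z \<in> Z" "snd z = fst z" unfolding pure_states_def by auto
    obtain \<alpha> where "\<alpha> \<in> profiles" "fst z = actvec \<alpha>" using state_action[OF z(1)] by auto
    moreover from this z(2) have "z = pure \<alpha>" unfolding pure_def by (metis prod.collapse)
    ultimately show "z \<in> pure ` profiles" by blast
  qed
  show "pure ` profiles \<subseteq> pure_states A"
    unfolding pure_states_def using pure_in_Z by (auto simp: pure_def)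
qed

sublocale markov_operator Z P_op
proof unfold_locales
  show "P_op (\<lambda>y. a * g y + b * h y) z = a * P_op g z + b * P_op h z" for a g b h z
    unfolding P_op_def by (simp add: algebra_simps sum.distrib sum_distrib_left)
  show "P_op g z \<le> P_op h z" if "z \<in> Z" "\<And>y. y \<in> Z \<Longrightarrow> g y \<le> h y" for z g h
    unfolding P_op_def using that step_in_Z draw_prob_nonneg by (intro sum_mono mult_left_mono) auto
  show "P_op (\<lambda>_. c) z = c" if "z \<in> Z" for z c
    unfolding P_op_def by (simp add: sum_distrib_right[symmetric] draw_prob_sum[OF that])
qed

lemma P_op_pure: assumes "\<alpha> \<in> profiles" shows "P_op g (pure \<alpha>) = g (pure \<alpha>)"
proof -
  have "draw_prob (pure \<alpha>) \<beta> * g (step (pure \<alpha>) \<beta>) = (if \<beta> = \<alpha> then g (pure \<alpha>) else 0)" for \<beta>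
    by (simp add: draw_prob_pure step_pure)
  then show ?thesis unfolding P_op_def using assms by simp
qed

lemma iter_pure: "\<alpha> \<in> profiles \<Longrightarrow> (P_op ^^ t) g (pure \<alpha>) = g (pure \<alpha>)"
  by (induction t) (simp_all add: P_op_pure)

lemma P_op_split:
  assumes "\<alpha> \<in> profiles"
  shows "P_op h z = draw_prob z \<alpha> * h (step z \<alpha>) + (\<Sum>\<beta>\<in>profiles - {\<alpha>}. draw_prob z \<beta> * h (step z \<beta>))"
  unfolding P_op_def using assms by (simp add: sum.remove)

lemma P_op_upper:
  assumes z: "z \<in> Z" and a: "\<alpha> \<in> profiles" and h: "\<And>y. y \<in> Z \<Longrightarrow> h y \<le> 1"
  shows "P_op h z \<le> draw_prob z \<alpha> * h (step z \<alpha>) + (1 - draw_prob z \<alpha>)"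
proof -
  have "(\<Sum>\<beta>\<in>profiles - {\<alpha>}. draw_prob z \<beta> * h (step z \<beta>)) \<le> (\<Sum>\<beta>\<in>profiles - {\<alpha>}. draw_prob z \<beta>)"
    by (rule sum_mono) (simp add: mult_left_le h step_in_Z[OF z] draw_prob_nonneg[OF z])
  also have "\<dots> = 1 - draw_prob z \<alpha>"
    using draw_prob_sum[OF z] a by (simp add: sum_diff1)
  finally show ?thesis using P_op_split[OF a] by simp
qed

lemma P_op_lower:
  assumes z: "z \<in> Z" and a: "\<alpha> \<in> profiles" and h: "\<And>y. y \<in> Z \<Longrightarrow> 0 \<le> h y"
  shows "draw_prob z \<alpha> * h (step z \<alpha>) \<le> P_op h z"
  using P_op_split[OF a, of h z] h step_in_Z[OF z] draw_prob_nonneg[OF z]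
    sum_nonneg[of "profiles - {\<alpha>}" "\<lambda>\<beta>. draw_prob z \<beta> * h (step z \<beta>)"]
  by simp

section \<open>Absorption near pure states\<close>

definition rate :: real where
  "rate = Max ((\<lambda>(i, \<beta>). 1 - \<epsilon> * u i \<beta>) ` (UNIV \<times> profiles))"

lemma rate_ge: "\<beta> \<in> profiles \<Longrightarrow> 1 - \<epsilon> * u i \<beta> \<le> rate"
  unfolding rate_def by (rule Max_ge) auto

lemma rate_bounds: "0 < rate" "rate < 1"
proof -
  have "rate \<in> (\<lambda>(i, \<beta>). 1 - \<epsilon> * u i \<beta>) ` (UNIV \<times> profiles)"
    unfolding rate_def using profiles_ne by (intro Max_in) auto
  then obtain i \<beta> where "\<beta> \<in> profiles" "rate = 1 - \<epsilon> * u i \<beta>" by auto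
  then show "0 < rate" "rate < 1" using learning_weight[of \<beta> i] by auto
qed

lemma defect_nonneg: "z \<in> Z \<Longrightarrow> 0 \<le> defect \<alpha> z"
  unfolding defect_def by (auto intro!: sum_nonneg simp: state_le_1)

lemma defect_le_card: "z \<in> Z \<Longrightarrow> defect \<alpha> z \<le> real CARD('i)"
proof -
  assume z: "z \<in> Z"
  have "defect \<alpha> z \<le> (\<Sum>i\<in>(UNIV::'i set). 1)"
    unfolding defect_def by (rule sum_mono) (use state_nonneg[OF z] in auto)
  then show ?thesis by simp
qed

lemma draw_prob_ge_defect: "z \<in> Z \<Longrightarrow> 1 - defect \<alpha> z \<le> draw_prob z \<alpha>"
  unfolding defect_def draw_prob_def
  by (rule prod_ge_one_minus_sum) (auto simp: state_nonneg state_le_1)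

lemma defect_step:
  assumes z: "z \<in> Z" and a: "\<alpha> \<in> profiles"
  shows "defect \<alpha> (step z \<alpha>) \<le> rate * defect \<alpha> z"
proof -
  have "defect \<alpha> (step z \<alpha>) = (\<Sum>i\<in>UNIV. (1 - \<epsilon> * u i \<alpha>) * (1 - snd z $ i $ \<alpha> i))"
    unfolding defect_def step_nth by (simp add: algebra_simps)
  also have "\<dots> \<le> (\<Sum>i\<in>UNIV. rate * (1 - snd z $ i $ \<alpha> i))"
    by (intro sum_mono mult_right_mono) (auto simp: rate_ge[OF a] state_le_1[OF z])
  finally show ?thesis unfolding defect_def by (simp add: sum_distrib_left)
qed

lemma draw_prob_step:
  assumes z: "z \<in> Z" and a: "\<alpha> \<in> profiles"
  shows "draw_prob z \<alpha> \<le> draw_prob (step z \<alpha>) \<alpha>"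
  unfolding draw_prob_def
proof (rule prod_mono, safe)
  fix i
  show "0 \<le> snd z $ i $ \<alpha> i" using state_nonneg[OF z] .
  have "0 \<le> \<epsilon> * u i \<alpha> * (1 - snd z $ i $ \<alpha> i)"
    using learning_weight[OF a, of i] state_le_1[OF z, of i "\<alpha> i"] by simp
  then show "snd z $ i $ \<alpha> i \<le> snd (step z \<alpha>) $ i $ \<alpha> i"
    unfolding step_nth by (simp add: algebra_simps)
qed

definition near :: "('i \<Rightarrow> 'a) \<Rightarrow> real \<Rightarrow> ('i,'a) state set" where
  "near \<alpha> \<eta> = {y \<in> Z. fst y = actvec \<alpha> \<and> defect \<alpha> y \<le> \<eta>}"

definition far :: "real \<Rightarrow> ('i,'a) state set" where
  "far \<eta> = Z - (\<Union>\<alpha>\<in>profiles. near \<alpha> \<eta>)"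

lemma near_mono: "\<eta> \<le> \<eta>' \<Longrightarrow> near \<alpha> \<eta> \<subseteq> near \<alpha> \<eta>'"
  unfolding near_def by auto

lemma step_near:
  assumes z: "z \<in> Z" and a: "\<alpha> \<in> profiles" and d: "defect \<alpha> z \<le> D"
  shows "step z \<alpha> \<in> near \<alpha> (rate * D)"
  using defect_step[OF z a] mult_left_mono[OF d less_imp_le[OF rate_bounds(1)]] step_in_Z[OF z a]
  unfolding near_def by simp

(* Playing \<alpha> again keeps the orbit in near \<alpha> and multiplies the defect by rate; any other
   profile is drawn with probability at most the current defect. Summing the geometric series of
   these escape probabilities gives D / (1 - rate). *)
lemma escape_bound:
  assumes a: "\<alpha> \<in> profiles"
  shows "z \<in> Z \<Longrightarrow> defect \<alpha> z \<le> D \<Longrightarrow>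
    (P_op ^^ Suc s) (indicator (Z - near \<alpha> (rate ^ Suc s * D))) z \<le> D / (1 - rate)"
proof (induction s arbitrary: z D)
  case 0
  have "(P_op ^^ Suc 0) (indicator (Z - near \<alpha> (rate ^ Suc 0 * D))) z \<le>
      draw_prob z \<alpha> * indicator (Z - near \<alpha> (rate * D)) (step z \<alpha>) + (1 - draw_prob z \<alpha>)"
    using P_op_upper[OF 0(1) a, of "indicator (Z - near \<alpha> (rate * D))"] by (simp add: indicator_def)
  also have "\<dots> \<le> D"
    using step_near[OF 0(1) a 0(2)] draw_prob_ge_defect[OF 0(1), of \<alpha>] 0(2) by simp
  also have "\<dots> \<le> D / (1 - rate)"
    using defect_nonneg[OF 0(1), of \<alpha>] 0(2) rate_bounds by (simp add: le_divide_eq mult_left_le)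
  finally show ?case .
next
  case (Suc s)
  note z = Suc.prems(1)
  let ?g = "(P_op ^^ Suc s) (indicator (Z - near \<alpha> (rate ^ Suc s * (rate * D))))"
  have "defect \<alpha> (step z \<alpha>) \<le> rate * D"
    using step_near[OF z a Suc.prems(2)] unfolding near_def by simp
  then have IH: "?g (step z \<alpha>) \<le> rate * D / (1 - rate)"
    by (rule Suc.IH[OF step_in_Z[OF z a]])
  have "(P_op ^^ Suc (Suc s)) (indicator (Z - near \<alpha> (rate ^ Suc (Suc s) * D))) z = P_op ?g z"
    by (simp add: mult.assoc mult.left_commute)
  also have "\<dots> \<le> draw_prob z \<alpha> * ?g (step z \<alpha>) + (1 - draw_prob z \<alpha>)"
    by (rule P_op_upper[OF z a]) (rule iter_upper, auto simp: indicator_def)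
  also have "\<dots> \<le> rate * D / (1 - rate) + D"
  proof (rule add_mono)
    have "0 \<le> rate * D / (1 - rate)"
      using defect_nonneg[OF z, of \<alpha>] Suc.prems(2) rate_bounds by simp
    then show "draw_prob z \<alpha> * ?g (step z \<alpha>) \<le> rate * D / (1 - rate)"
      using IH draw_prob_nonneg[OF z] draw_prob_le_1[OF z]
      by (meson mult_left_le_one_le mult_left_mono order_trans)
    show "1 - draw_prob z \<alpha> \<le> D" using draw_prob_ge_defect[OF z, of \<alpha>] Suc.prems(2) by simp
  qed
  also have "\<dots> = D / (1 - rate)" using rate_bounds by (simp add: field_simps)
  finally show ?case .
qed

lemma escape_near:
  assumes a: "\<alpha> \<in> profiles" and y: "y \<in> near \<alpha> \<eta>"
  shows "(P_op ^^ s) (indicator (Z - near \<alpha> \<eta>)) y \<le> defect \<alpha> y / (1 - rate)"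
proof (cases s)
  case 0
  then show ?thesis using y defect_nonneg rate_bounds unfolding near_def by auto
next
  case (Suc s')
  have yZ: "y \<in> Z" and d: "defect \<alpha> y \<le> \<eta>" using y unfolding near_def by auto
  have "rate ^ Suc s' * defect \<alpha> y \<le> \<eta>"
    using d defect_nonneg[OF yZ, of \<alpha>] rate_bounds
    by (meson less_imp_le mult_left_le_one_le order_trans power_le_one zero_le_power)
  then have "Z - near \<alpha> \<eta> \<subseteq> Z - near \<alpha> (rate ^ Suc s' * defect \<alpha> y)"
    using near_mono by blast
  then have "(P_op ^^ s) (indicator (Z - near \<alpha> \<eta>)) y \<le>
      (P_op ^^ s) (indicator (Z - near \<alpha> (rate ^ Suc s' * defect \<alpha> y))) y"
    by (intro iter_mono[OF yZ]) (auto simp: indicator_def)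
  also have "\<dots> \<le> defect \<alpha> y / (1 - rate)"
    unfolding Suc by (rule escape_bound[OF a yZ order_refl])
  finally show ?thesis .
qed

lemma reach_bound:
  assumes a: "\<alpha> \<in> profiles" and H: "\<And>y. y \<in> Z \<Longrightarrow> 0 \<le> H y" and c: "0 \<le> c" and q: "0 \<le> q"
  shows "z \<in> Z \<Longrightarrow> q \<le> draw_prob z \<alpha> \<Longrightarrow> defect \<alpha> z \<le> D \<Longrightarrow>
    (\<And>y. y \<in> Z \<Longrightarrow> defect \<alpha> y \<le> rate ^ J * D \<Longrightarrow> c \<le> H y) \<Longrightarrow> q ^ J * c \<le> (P_op ^^ J) H z"
proof (induction J arbitrary: z D)
  case (Suc J)
  note z = Suc.prems(1)
  have "defect \<alpha> (step z \<alpha>) \<le> rate * D"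
    using step_near[OF z a Suc.prems(3)] unfolding near_def by simp
  moreover have "q \<le> draw_prob (step z \<alpha>) \<alpha>" using draw_prob_step[OF z a] Suc.prems(2) by simp
  ultimately have IH: "q ^ J * c \<le> (P_op ^^ J) H (step z \<alpha>)"
    by (intro Suc.IH[OF step_in_Z[OF z a]] Suc.prems(4)) (auto simp: algebra_simps)
  have "q ^ Suc J * c = q * (q ^ J * c)" by simp
  also have "\<dots> \<le> draw_prob z \<alpha> * (P_op ^^ J) H (step z \<alpha>)"
    using IH Suc.prems(2) q c by (intro mult_mono) auto
  also have "\<dots> \<le> P_op ((P_op ^^ J) H) z"
    by (rule P_op_lower[OF z a]) (rule iter_lower, auto intro: H)
  finally show ?case by simp
qed simp

lemma likely_profile:
  assumes z: "z \<in> Z" shows "\<exists>\<alpha>\<in>profiles. 1 / real (card profiles) \<le> draw_prob z \<alpha>"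
proof (rule ccontr)
  assume "\<not> ?thesis"
  then have "(\<Sum>\<alpha>\<in>profiles. draw_prob z \<alpha>) < (\<Sum>\<alpha>\<in>profiles. 1 / real (card profiles))"
    using profiles_ne by (intro sum_strict_mono) auto
  then show False using draw_prob_sum[OF z] profiles_ne by simp
qed

(* Some profile \<alpha> has probability at least 1 / card profiles, and this probability does not
   decrease while \<alpha> is repeated; after J repetitions the defect is so small that escape_bound keeps
   the orbit near pure \<alpha> with probability at least 1/2. *)
lemma uniform_reach:
  obtains \<delta> J where "0 < \<delta>" "\<delta> \<le> 1"
    "\<And>m z. z \<in> Z \<Longrightarrow> \<exists>\<alpha>\<in>profiles.
       \<delta> \<le> (P_op ^^ (J + Suc m)) (indicator (near \<alpha> (rate ^ (J + Suc m) * real CARD('i)))) z"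
proof -
  define n where "n = real CARD('i)"
  have n: "0 < n" unfolding n_def by simp
  obtain J where J: "rate ^ J < (1 - rate) / (2 * n)"
    using real_arch_pow_inv[of "(1 - rate) / (2 * n)" rate] rate_bounds n by auto
  define D where "D = rate ^ J * n"
  have D: "D / (1 - rate) \<le> 1 / 2"
    using J n rate_bounds unfolding D_def by (simp add: field_simps)
  define q where "q = 1 / real (card profiles)"
  have "0 < card profiles" using profiles_ne by (simp add: card_gt_0_iff)
  then have q: "0 < q" "q \<le> 1" unfolding q_def by auto
  have "\<exists>\<alpha>\<in>profiles. q ^ J * (1 / 2) \<le>
      (P_op ^^ (J + Suc m)) (indicator (near \<alpha> (rate ^ (J + Suc m) * n))) z"
    if z: "z \<in> Z" for m z
  proof -
    obtain \<alpha> where a: "\<alpha> \<in> profiles" and pa: "q \<le> draw_prob z \<alpha>"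
      using likely_profile[OF z] unfolding q_def by auto
    define H where "H = (P_op ^^ Suc m) (indicator (near \<alpha> (rate ^ Suc m * D)))"
    have H_half: "1 / 2 \<le> H y" if y: "y \<in> Z" "defect \<alpha> y \<le> rate ^ J * n" for y
    proof -
      have "H y = 1 - (P_op ^^ Suc m) (indicator (Z - near \<alpha> (rate ^ Suc m * D))) y"
        unfolding H_def by (rule iter_indicator_compl[OF y(1)]) (auto simp: near_def)
      moreover have "(P_op ^^ Suc m) (indicator (Z - near \<alpha> (rate ^ Suc m * D))) y \<le> D / (1 - rate)"
        by (rule escape_bound[OF a y(1)]) (use y(2) in \<open>simp add: D_def\<close>)
      ultimately show ?thesis using D by linarith
    qed
    have "q ^ J * (1 / 2) \<le> (P_op ^^ J) H z"
      by (rule reach_bound[OF a _ _ _ z pa defect_le_card[OF z]])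
         (use q H_half iter_indicator_bounds[where t="Suc m"] in \<open>auto simp: H_def n_def simp del: funpow.simps\<close>)
    also have "rate ^ Suc m * D = rate ^ (J + Suc m) * n"
      unfolding D_def by (simp add: power_add mult_ac)
    then have "(P_op ^^ J) H z = (P_op ^^ (J + Suc m)) (indicator (near \<alpha> (rate ^ (J + Suc m) * n))) z"
      by (simp only: H_def funpow_add o_apply)
    finally show ?thesis using a by blast
  qed
  moreover have "0 < q ^ J * (1 / 2)" "q ^ J * (1 / 2) \<le> 1"
    using q power_le_one[of q J] by auto
  ultimately show ?thesis using that unfolding n_def by blast
qed

lemma far_vanishes:
  assumes \<eta>0: "0 < \<eta>0" and ep: "0 < ep"
  shows "\<exists>T0. \<forall>t\<ge>T0. \<forall>z\<in>Z. (P_op ^^ t) (indicator (far \<eta>0)) z \<le> ep"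
proof -
  obtain \<delta> J where \<delta>: "0 < \<delta>" "\<delta> \<le> 1" and reach: "\<And>m z. z \<in> Z \<Longrightarrow> \<exists>\<alpha>\<in>profiles.
      \<delta> \<le> (P_op ^^ (J + Suc m)) (indicator (near \<alpha> (rate ^ (J + Suc m) * real CARD('i)))) z"
    by (rule uniform_reach) blast
  define n where "n = real CARD('i)"
  have n: "0 < n" unfolding n_def by simp
  define \<eta> where "\<eta> = min \<eta>0 ((1 - rate) * \<delta> * ep / 2)"
  have \<eta>: "0 < \<eta>" "\<eta> \<le> \<eta>0"
    unfolding \<eta>_def using \<eta>0 \<delta> ep rate_bounds by auto
  have "\<eta> \<le> (1 - rate) * (\<delta> * ep / 2)" unfolding \<eta>_def by simp
  then have \<eta>_small: "\<eta> / (1 - rate) \<le> \<delta> * ep / 2"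
    using rate_bounds by (simp add: pos_divide_le_eq mult.commute)
  obtain m where m: "rate ^ m < \<eta> / n"
    using real_arch_pow_inv[of "\<eta> / n" rate] \<eta> n rate_bounds by auto
  define M where "M = J + Suc m"
  have "rate ^ M \<le> rate ^ m"
    unfolding M_def using rate_bounds by (intro power_decreasing) auto
  with m n have rM: "rate ^ M * n \<le> \<eta>"
    by (simp add: field_simps) (meson less_le_trans mult_left_mono less_imp_le not_le)
  define N where "N \<alpha> = near \<alpha> (rate ^ M * n)" for \<alpha>
  have stay: "(P_op ^^ s) (indicator (far \<eta>0)) y \<le> \<eta> / (1 - rate)"
    if a: "\<alpha> \<in> profiles" and y: "y \<in> N \<alpha>" for \<alpha> s y
  proof -
    have y': "y \<in> near \<alpha> \<eta>" using y near_mono[OF rM] unfolding N_def by blast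
    then have yZ: "y \<in> Z" unfolding near_def by simp
    have "far \<eta>0 \<subseteq> Z - near \<alpha> \<eta>" using a near_mono[OF \<eta>(2)] unfolding far_def by blast
    then have "(P_op ^^ s) (indicator (far \<eta>0)) y \<le> (P_op ^^ s) (indicator (Z - near \<alpha> \<eta>)) y"
      by (intro iter_mono[OF yZ]) (auto simp: indicator_def)
    also have "\<dots> \<le> defect \<alpha> y / (1 - rate)" by (rule escape_near[OF a y'])
    also have "\<dots> \<le> \<eta> / (1 - rate)"
      using y' rate_bounds unfolding near_def by (simp add: divide_right_mono)
    finally show ?thesis .
  qed
  obtain k where k: "(1 - \<delta>) ^ k < ep / 2"
    using real_arch_pow_inv[of "ep / 2" "1 - \<delta>"] ep \<delta> by auto
  have "(P_op ^^ t) (indicator (far \<eta>0)) z \<le> ep" if t: "k * M \<le> t" and z: "z \<in> Z" for t z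
  proof -
    have "(P_op ^^ ((t - k * M) + k * M)) (indicator (far \<eta>0)) z \<le> (\<eta> / (1 - rate)) / \<delta> + (1 - \<delta>) ^ k"
    proof (rule renewal_bound[OF _ _ _ stay \<delta> _ z])
      show "\<And>z. z \<in> Z \<Longrightarrow> \<exists>\<alpha>\<in>profiles. \<delta> \<le> (P_op ^^ M) (indicator (N \<alpha>)) z"
        unfolding N_def M_def n_def by (rule reach)
    qed (use \<eta> rate_bounds in \<open>auto simp: indicator_def N_def near_def\<close>)
    also have "\<dots> \<le> ep / 2 + ep / 2"
    proof -
      have "\<eta> / (1 - rate) / \<delta> \<le> ep / 2"
        using divide_right_mono[OF \<eta>_small, of \<delta>] \<delta> by simp
      then show ?thesis using k by linarith
    qed
    finally show ?thesis using t by simp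
  qed
  then show ?thesis by blast
qed

section \<open>Uniform convergence of the iterates\<close>

lemma dist_pure_le:
  assumes y: "y \<in> Z" and f: "fst y = actvec \<alpha>"
  shows "dist y (pure \<alpha>) \<le> 2 * defect \<alpha> y"
proof -
  have "dist y (pure \<alpha>) = norm (snd y - actvec \<alpha>)"
    using f unfolding pure_def by (cases y) (simp add: dist_Pair_Pair dist_norm)
  also have "\<dots> \<le> (\<Sum>i\<in>UNIV. norm ((snd y - actvec \<alpha>) $ i))"
    unfolding norm_vec_def by (rule L2_set_le_sum) auto
  also have "\<dots> \<le> (\<Sum>i\<in>UNIV. 2 * (1 - snd y $ i $ \<alpha> i))"
  proof (rule sum_mono)
    fix i
    let ?x = "snd y $ i"
    have "norm ((snd y - actvec \<alpha>) $ i) \<le> (\<Sum>k\<in>UNIV. \<bar>?x $ k - (if k = \<alpha> i then 1 else 0)\<bar>)"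
      using norm_le_l1_cart[of "(snd y - actvec \<alpha>) $ i"] by (simp add: actvec_nth)
    also have "\<dots> = \<bar>?x $ \<alpha> i - 1\<bar> + (\<Sum>k\<in>UNIV - {\<alpha> i}. ?x $ k)"
      using state_nonneg[OF y] by (simp add: sum.remove[of UNIV "\<alpha> i"])
    also have "(\<Sum>k\<in>UNIV - {\<alpha> i}. ?x $ k) = 1 - ?x $ \<alpha> i"
      using state_sum[OF y, of i] by (simp add: sum_diff1)
    also have "\<bar>?x $ \<alpha> i - 1\<bar> = 1 - ?x $ \<alpha> i" using state_le_1[OF y] by simp
    finally show "norm ((snd y - actvec \<alpha>) $ i) \<le> 2 * (1 - snd y $ i $ \<alpha> i)" by simp
  qed
  also have "\<dots> = 2 * defect \<alpha> y" unfolding defect_def by (simp add: sum_distrib_left)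
  finally show ?thesis .
qed

lemma continuous_near:
  fixes f :: "('i,'a) state \<Rightarrow> real"
  assumes f: "continuous_on Z f" and e: "0 < e"
  shows "\<exists>\<eta>>0. \<forall>\<alpha>\<in>profiles. \<forall>y\<in>near \<alpha> \<eta>. \<bar>f y - f (pure \<alpha>)\<bar> \<le> e"
proof (rule finite_ex_pos_common)
  fix \<alpha> assume a: "\<alpha> \<in> profiles"
  obtain d where d: "d > 0" "\<forall>y\<in>Z. dist y (pure \<alpha>) < d \<longrightarrow> dist (f y) (f (pure \<alpha>)) < e"
    using f pure_in_Z[OF a] e unfolding continuous_on_iff by meson
  have "\<bar>f y - f (pure \<alpha>)\<bar> \<le> e" if "y \<in> near \<alpha> (d / 3)" for y
  proof -
    have y: "y \<in> Z" "fst y = actvec \<alpha>" "defect \<alpha> y \<le> d / 3" using that unfolding near_def by auto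
    then have "dist y (pure \<alpha>) < d" using dist_pure_le[OF y(1,2)] d by linarith
    then show ?thesis using d y by (auto simp: dist_real_def)
  qed
  then show "\<exists>\<eta>>0. \<forall>y\<in>near \<alpha> \<eta>. \<bar>f y - f (pure \<alpha>)\<bar> \<le> e" using d by (intro exI[of _ "d / 3"]) auto
next
  fix \<alpha> d d' assume "\<forall>y\<in>near \<alpha> d. \<bar>f y - f (pure \<alpha>)\<bar> \<le> e" "0 < d'" "d' \<le> d"
  then show "\<forall>y\<in>near \<alpha> d'. \<bar>f y - f (pure \<alpha>)\<bar> \<le> e" using near_mono[of d' d \<alpha>] by auto
qed simp

lemma concentration:
  assumes \<eta>: "0 < \<eta>" and e: "0 < e" and K: "0 \<le> K"
  obtains T0 where "\<And>t g z. T0 \<le> t \<Longrightarrow> z \<in> Z \<Longrightarrow> (\<And>y. y \<in> Z \<Longrightarrow> \<bar>g y\<bar> \<le> K) \<Longrightarrow>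
    (\<And>\<alpha> y. \<alpha> \<in> profiles \<Longrightarrow> y \<in> near \<alpha> \<eta> \<Longrightarrow> \<bar>g y\<bar> \<le> e) \<Longrightarrow> \<bar>(P_op ^^ t) g z\<bar> \<le> 2 * e"
proof -
  obtain T0 where T0: "\<And>t z. t \<ge> T0 \<Longrightarrow> z \<in> Z \<Longrightarrow> (P_op ^^ t) (indicator (far \<eta>)) z \<le> e / (K + 1)"
    using far_vanishes[OF \<eta>, of "e / (K + 1)"] e K by auto
  have "\<bar>(P_op ^^ t) g z\<bar> \<le> 2 * e"
    if t: "T0 \<le> t" and z: "z \<in> Z" and K_bound: "\<And>y. y \<in> Z \<Longrightarrow> \<bar>g y\<bar> \<le> K"
      and e_bound: "\<And>\<alpha> y. \<alpha> \<in> profiles \<Longrightarrow> y \<in> near \<alpha> \<eta> \<Longrightarrow> \<bar>g y\<bar> \<le> e" for t g z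
  proof -
    have "\<bar>g y\<bar> \<le> K * indicator (far \<eta>) y + e" if y: "y \<in> Z" for y
    proof (cases "y \<in> far \<eta>")
      case True
      then show ?thesis using K_bound[OF y] e by simp
    next
      case False
      then obtain \<alpha> where "\<alpha> \<in> profiles" "y \<in> near \<alpha> \<eta>" using y unfolding far_def by blast
      then show ?thesis using e_bound False by simp
    qed
    then have "\<bar>(P_op ^^ t) g z\<bar> \<le> (P_op ^^ t) (\<lambda>y. K * indicator (far \<eta>) y + e) z"
      by (rule order_trans[OF iter_abs[OF z] iter_mono[OF z]])
    also have "\<dots> = K * (P_op ^^ t) (indicator (far \<eta>)) z + e" by (rule iter_affine[OF z])
    also have "\<dots> \<le> K * (e / (K + 1)) + e" using mult_left_mono[OF T0[OF t z] K] by simp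
    also have "\<dots> \<le> 2 * e" using K e by (simp add: field_simps)
    finally show ?thesis .
  qed
  then show ?thesis by (rule that)
qed

lemma iter_stable_near:
  fixes f :: "('i,'a) state \<Rightarrow> real"
  assumes f: "continuous_on Z f" and fb: "\<And>y. y \<in> Z \<Longrightarrow> \<bar>f y\<bar> \<le> K" and e: "0 < e"
  shows "\<exists>\<eta>>0. \<forall>\<alpha>\<in>profiles. \<forall>y\<in>near \<alpha> \<eta>. \<forall>s. \<bar>(P_op ^^ s) f y - f y\<bar> \<le> e"
proof -
  have K: "0 \<le> K" using fb[OF pure_in_Z] profiles_ne by force
  obtain \<eta>0 where \<eta>0: "0 < \<eta>0" "\<And>\<alpha> y. \<alpha> \<in> profiles \<Longrightarrow> y \<in> near \<alpha> \<eta>0 \<Longrightarrow> \<bar>f y - f (pure \<alpha>)\<bar> \<le> e / 4"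
    using continuous_near[OF f, of "e / 4"] e by auto
  define \<eta> where "\<eta> = min \<eta>0 ((1 - rate) * (e / (4 * (2 * K + 1))))"
  have \<eta>: "0 < \<eta>" "\<eta> \<le> \<eta>0" unfolding \<eta>_def using \<eta>0 e rate_bounds K by auto
  have "\<eta> \<le> (1 - rate) * (e / (4 * (2 * K + 1)))" unfolding \<eta>_def by simp
  then have "\<eta> / (1 - rate) \<le> e / (4 * (2 * K + 1))"
    using rate_bounds by (simp add: pos_divide_le_eq mult.commute)
  then have "2 * K * (\<eta> / (1 - rate)) \<le> 2 * K * (e / (4 * (2 * K + 1)))"
    using K by (intro mult_left_mono) simp_all
  also have "\<dots> \<le> e / 4" using K e by (simp add: field_simps)
  finally have escape_small: "2 * K * (\<eta> / (1 - rate)) \<le> e / 4" .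
  have "\<bar>(P_op ^^ s) f y - f y\<bar> \<le> e" if a: "\<alpha> \<in> profiles" and y: "y \<in> near \<alpha> \<eta>" for \<alpha> y s
  proof -
    have yZ: "y \<in> Z" and dy: "defect \<alpha> y \<le> \<eta>" using y unfolding near_def by auto
    have close: "\<bar>f w - f (pure \<alpha>)\<bar> \<le> e / 4" if "w \<in> near \<alpha> \<eta>" for w
      using \<eta>0(2)[OF a] near_mono[OF \<eta>(2)] that by blast
    have bound: "\<bar>f w - f (pure \<alpha>)\<bar> \<le> 2 * K * indicator (Z - near \<alpha> \<eta>) w + e / 4"
      if "w \<in> Z" for w
    proof (cases "w \<in> near \<alpha> \<eta>")
      case True
      then show ?thesis using close by simp
    next
      case False
      then show ?thesis using fb[OF that] fb[OF pure_in_Z[OF a]] that e by simp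
    qed
    have "\<bar>(P_op ^^ s) (\<lambda>w. f w - f (pure \<alpha>)) y\<bar> \<le>
        (P_op ^^ s) (\<lambda>w. 2 * K * indicator (Z - near \<alpha> \<eta>) w + e / 4) y"
      by (rule order_trans[OF iter_abs[OF yZ] iter_mono[OF yZ]]) (rule bound)
    also have "\<dots> = 2 * K * (P_op ^^ s) (indicator (Z - near \<alpha> \<eta>)) y + e / 4"
      by (rule iter_affine[OF yZ])
    also have "\<dots> \<le> 2 * K * (\<eta> / (1 - rate)) + e / 4"
    proof -
      have "(P_op ^^ s) (indicator (Z - near \<alpha> \<eta>)) y \<le> \<eta> / (1 - rate)"
        using escape_near[OF a y, of s] divide_right_mono[OF dy, of "1 - rate"] rate_bounds by simp
      then show ?thesis using K by (intro add_mono mult_left_mono) simp_all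
    qed
    finally have "\<bar>(P_op ^^ s) f y - f (pure \<alpha>)\<bar> \<le> e / 2"
      using iter_affine[OF yZ, of s 1 f "- f (pure \<alpha>)"] escape_small by simp
    then show ?thesis using close[OF y] by linarith
  qed
  then show ?thesis using \<eta> by blast
qed

lemma iter_uniformly_Cauchy:
  assumes f: "continuous_on Z f" and fb: "\<And>y. y \<in> Z \<Longrightarrow> \<bar>f y\<bar> \<le> K"
  shows "uniformly_Cauchy_on Z (\<lambda>t. (P_op ^^ t) f)"
proof (rule uniformly_Cauchy_onI)
  fix e :: real assume e: "0 < e"
  have K: "0 \<le> K" using fb[OF pure_in_Z] profiles_ne by force
  obtain \<eta> where \<eta>: "0 < \<eta>" "\<And>\<alpha> y s. \<alpha> \<in> profiles \<Longrightarrow> y \<in> near \<alpha> \<eta> \<Longrightarrow> \<bar>(P_op ^^ s) f y - f y\<bar> \<le> e / 4"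
    using iter_stable_near[OF f fb, of "e / 4"] e by auto
  have "0 < e / 4" "0 \<le> 2 * K" using e K by auto
  then obtain T0 where T0: "\<And>t g z. T0 \<le> t \<Longrightarrow> z \<in> Z \<Longrightarrow> (\<And>y. y \<in> Z \<Longrightarrow> \<bar>g y\<bar> \<le> 2 * K) \<Longrightarrow>
      (\<And>\<alpha> y. \<alpha> \<in> profiles \<Longrightarrow> y \<in> near \<alpha> \<eta> \<Longrightarrow> \<bar>g y\<bar> \<le> e / 4) \<Longrightarrow>
      \<bar>(P_op ^^ t) g z\<bar> \<le> 2 * (e / 4)"
    by (rule concentration[OF \<eta>(1)]) blast
  have close: "\<bar>(P_op ^^ (t + s)) f z - (P_op ^^ t) f z\<bar> \<le> e / 2" if "t \<ge> T0" "z \<in> Z" for t s z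
  proof -
    have "\<bar>(P_op ^^ s) f y - f y\<bar> \<le> 2 * K" if "y \<in> Z" for y
      using iter_lower[OF that, of "- K" f s] iter_upper[OF that, of f K s] fb[OF that] fb by force
    then have "\<bar>(P_op ^^ t) (\<lambda>y. (P_op ^^ s) f y - f y) z\<bar> \<le> 2 * (e / 4)"
      by (rule T0[OF that]) (use \<eta>(2) in auto)
    then show ?thesis by (simp add: iter_diff funpow_add)
  qed
  have "dist ((P_op ^^ m) f z) ((P_op ^^ n) f z) < e" if "m \<ge> T0" "n \<ge> T0" "z \<in> Z" for m n z
  proof (cases "m \<le> n")
    case True
    then obtain s where "n = m + s" using le_Suc_ex by blast
    then show ?thesis using close[OF that(1,3), of s] e by (simp add: dist_real_def abs_minus_commute)
  next
    case False
    then obtain s where "m = n + s" using le_Suc_ex[of n m] by auto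
    then show ?thesis using close[OF that(2,3), of s] e by (simp add: dist_real_def)
  qed
  then show "\<exists>M. \<forall>z\<in>Z. \<forall>m\<ge>M. \<forall>n\<ge>M. dist ((P_op ^^ m) f z) ((P_op ^^ n) f z) < e" by blast
qed

lemma iter_vanishing:
  assumes F: "continuous_on Z F" and Fb: "\<And>y. y \<in> Z \<Longrightarrow> \<bar>F y\<bar> \<le> K"
    and F0: "\<And>\<alpha>. \<alpha> \<in> profiles \<Longrightarrow> F (pure \<alpha>) = 0"
  shows "uniform_limit Z (\<lambda>t. (P_op ^^ t) F) (\<lambda>_. 0) sequentially"
proof (rule uniform_limitI)
  fix e :: real assume e: "0 < e"
  have K: "0 \<le> K" using Fb[OF pure_in_Z] profiles_ne by force
  obtain \<eta> where \<eta>: "0 < \<eta>" "\<And>\<alpha> y. \<alpha> \<in> profiles \<Longrightarrow> y \<in> near \<alpha> \<eta> \<Longrightarrow> \<bar>F y\<bar> \<le> e / 4"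
    using continuous_near[OF F, of "e / 4"] e F0 by auto
  have "0 < e / 4" using e by simp
  then obtain T0 where T0: "\<And>t g z. T0 \<le> t \<Longrightarrow> z \<in> Z \<Longrightarrow> (\<And>y. y \<in> Z \<Longrightarrow> \<bar>g y\<bar> \<le> K) \<Longrightarrow>
      (\<And>\<alpha> y. \<alpha> \<in> profiles \<Longrightarrow> y \<in> near \<alpha> \<eta> \<Longrightarrow> \<bar>g y\<bar> \<le> e / 4) \<Longrightarrow>
      \<bar>(P_op ^^ t) g z\<bar> \<le> 2 * (e / 4)"
    using K by (rule concentration[OF \<eta>(1)]) blast
  show "\<forall>\<^sub>F t in sequentially. \<forall>z\<in>Z. dist ((P_op ^^ t) F z) 0 < e"
    unfolding eventually_sequentially using T0[OF _ _ Fb \<eta>(2)] e by (force simp: dist_real_def)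
qed

lemma continuous_draw_prob: "continuous_on S (\<lambda>y. draw_prob y \<alpha>)"
  unfolding draw_prob_def by (intro continuous_intros)

lemma abs_draw_prob_le_1: "y \<in> Z \<Longrightarrow> \<bar>draw_prob y \<alpha>\<bar> \<le> 1"
  using draw_prob_nonneg draw_prob_le_1 by (simp add: abs_le_iff)

definition absorb_prob :: "('i \<Rightarrow> 'a) \<Rightarrow> ('i,'a) state \<Rightarrow> real" where
  "absorb_prob \<alpha> z = lim (\<lambda>t. (P_op ^^ t) (\<lambda>y. draw_prob y \<alpha>) z)"

lemma uniform_limit_absorb_prob:
  "uniform_limit Z (\<lambda>t. (P_op ^^ t) (\<lambda>y. draw_prob y \<alpha>)) (absorb_prob \<alpha>) sequentially"
proof -
  have "uniformly_convergent_on Z (\<lambda>t. (P_op ^^ t) (\<lambda>y. draw_prob y \<alpha>))"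
    by (intro Cauchy_uniformly_convergent iter_uniformly_Cauchy[OF continuous_draw_prob abs_draw_prob_le_1])
  then show ?thesis unfolding uniformly_convergent_uniform_limit_iff absorb_prob_def[abs_def] .
qed

lemma absorb_prob_tendsto: "z \<in> Z \<Longrightarrow> (\<lambda>t. (P_op ^^ t) (\<lambda>y. draw_prob y \<alpha>) z) \<longlonglongrightarrow> absorb_prob \<alpha> z"
  by (rule tendsto_uniform_limitI[OF uniform_limit_absorb_prob])

lemma absorb_prob_nonneg: "z \<in> Z \<Longrightarrow> 0 \<le> absorb_prob \<alpha> z"
  by (rule LIMSEQ_le_const[OF absorb_prob_tendsto]) (auto intro!: iter_lower draw_prob_nonneg)

lemma absorb_prob_sum: assumes z: "z \<in> Z" shows "(\<Sum>\<alpha>\<in>profiles. absorb_prob \<alpha> z) = 1"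
proof -
  have "(\<Sum>\<alpha>\<in>profiles. (P_op ^^ t) (\<lambda>y. draw_prob y \<alpha>) z) = 1" for t
  proof -
    have "(\<Sum>\<alpha>\<in>profiles. (P_op ^^ t) (\<lambda>y. draw_prob y \<alpha>) z) =
        (P_op ^^ t) (\<lambda>y. \<Sum>\<alpha>\<in>profiles. draw_prob y \<alpha>) z"
      by (rule iter_sum[symmetric]) simp
    also have "\<dots> = (P_op ^^ t) (\<lambda>_. 1) z" by (rule iter_cong[OF z]) (simp add: draw_prob_sum)
    finally show ?thesis using iter_const[OF z] by simp
  qed
  moreover have "(\<lambda>t. \<Sum>\<alpha>\<in>profiles. (P_op ^^ t) (\<lambda>y. draw_prob y \<alpha>) z) \<longlonglongrightarrow> (\<Sum>\<alpha>\<in>profiles. absorb_prob \<alpha> z)"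
    by (intro tendsto_sum absorb_prob_tendsto[OF z])
  ultimately show ?thesis using LIMSEQ_unique[OF _ tendsto_const] by simp
qed

lemma absorb_prob_pure:
  assumes "\<beta> \<in> profiles" shows "absorb_prob \<alpha> (pure \<beta>) = (if \<alpha> = \<beta> then 1 else 0)"
proof -
  have "(\<lambda>t. draw_prob (pure \<beta>) \<alpha>) \<longlonglongrightarrow> absorb_prob \<alpha> (pure \<beta>)"
    using absorb_prob_tendsto[OF pure_in_Z[OF assms], of \<alpha>] by (simp add: iter_pure[OF assms])
  then have "absorb_prob \<alpha> (pure \<beta>) = draw_prob (pure \<beta>) \<alpha>"
    using LIMSEQ_unique[OF _ tendsto_const] by blast
  then show ?thesis by (simp add: draw_prob_pure)
qed

lemma uniform_limit_iter:
  assumes f: "continuous_on Z f" and fb: "\<And>y. y \<in> Z \<Longrightarrow> \<bar>f y\<bar> \<le> K"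
  shows "uniform_limit Z (\<lambda>t. (P_op ^^ t) f) (\<lambda>z. \<Sum>\<alpha>\<in>profiles. f (pure \<alpha>) * absorb_prob \<alpha> z) sequentially"
proof -
  have K: "0 \<le> K" using fb[OF pure_in_Z] profiles_ne by force
  define S where "S y = (\<Sum>\<alpha>\<in>profiles. f (pure \<alpha>) * draw_prob y \<alpha>)" for y
  define F where "F y = f y - S y" for y
  have S_bound: "\<bar>S y\<bar> \<le> real (card profiles) * K" if y: "y \<in> Z" for y
  proof -
    have "\<bar>S y\<bar> \<le> (\<Sum>\<alpha>\<in>profiles. \<bar>f (pure \<alpha>)\<bar> * \<bar>draw_prob y \<alpha>\<bar>)"
      unfolding S_def by (rule order_trans[OF sum_abs]) (simp add: abs_mult)
    also have "\<dots> \<le> (\<Sum>\<alpha>\<in>profiles. K * 1)"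
      using fb[OF pure_in_Z] abs_draw_prob_le_1[OF y] K by (intro sum_mono mult_mono) auto
    finally show ?thesis by simp
  qed
  have F0: "F (pure \<beta>) = 0" if "\<beta> \<in> profiles" for \<beta>
    using that unfolding F_def S_def by (simp add: draw_prob_pure if_distrib cong: if_cong)
  have "uniform_limit Z (\<lambda>t. (P_op ^^ t) F) (\<lambda>_. 0) sequentially"
  proof (rule iter_vanishing)
    show "continuous_on Z F" unfolding F_def S_def by (intro continuous_intros f continuous_draw_prob)
    show "\<bar>F y\<bar> \<le> K + real (card profiles) * K" if "y \<in> Z" for y
      using fb[OF that] S_bound[OF that] unfolding F_def by linarith
  qed (rule F0)
  then have lim: "uniform_limit Z
      (\<lambda>t z. (P_op ^^ t) F z + (\<Sum>\<alpha>\<in>profiles. f (pure \<alpha>) * (P_op ^^ t) (\<lambda>y. draw_prob y \<alpha>) z))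
      (\<lambda>z. 0 + (\<Sum>\<alpha>\<in>profiles. f (pure \<alpha>) * absorb_prob \<alpha> z)) sequentially"
    by (intro uniform_limit_add uniform_limit_sum uniform_limit_intros uniform_limit_absorb_prob
        finite_profiles)
  have decomp: "(P_op ^^ t) f z =
      (P_op ^^ t) F z + (\<Sum>\<alpha>\<in>profiles. f (pure \<alpha>) * (P_op ^^ t) (\<lambda>y. draw_prob y \<alpha>) z)" for t z
  proof -
    have "(P_op ^^ t) f z = (P_op ^^ t) (\<lambda>y. F y + S y) z" by (simp add: F_def)
    then show ?thesis by (simp add: iter_add S_def iter_sum iter_scale)
  qed
  show ?thesis by (rule iffD1[OF uniform_limit_cong' lim]) (simp_all add: decomp)
qed

section \<open>Transition kernels\<close>

lemma space_Zm [simp]: "space (Zm A) = Z"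
  unfolding Zm_def by (simp add: space_restrict_space)

lemma sets_Zm_Int: "S \<in> sets borel \<Longrightarrow> Z \<inter> S \<in> sets (Zm A)"
  unfolding Zm_def by (auto simp: sets_restrict_space)

lemma measurable_step [measurable]: "\<beta> \<in> profiles \<Longrightarrow> (\<lambda>z. step z \<beta>) \<in> Zm A \<rightarrow>\<^sub>M Zm A"
proof -
  assume b: "\<beta> \<in> profiles"
  have "continuous_on UNIV (\<lambda>z. step z \<beta>)" unfolding next_state_def by (intro continuous_intros)
  then show ?thesis unfolding Zm_def
    by (rule measurable_restrict_space3[OF borel_measurable_continuous_onI]) (use b step_in_Z in auto)
qed

lemma measurable_draw_prob [measurable]: "(\<lambda>z. draw_prob z \<beta>) \<in> borel_measurable (Zm A)"
  unfolding Zm_def by (rule borel_measurable_continuous_on_restrict[OF continuous_draw_prob])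

lemma measurable_iter: "g \<in> borel_measurable (Zm A) \<Longrightarrow> (P_op ^^ t) g \<in> borel_measurable (Zm A)"
proof (induction t)
  case (Suc t)
  then show ?case
    unfolding funpow.simps o_apply P_op_def[abs_def]
    by (intro borel_measurable_sum borel_measurable_times measurable_draw_prob
        measurable_compose[OF measurable_step]) auto
qed simp

lemma pmf_prof_pmf: assumes z: "z \<in> Z" shows "pmf (prof_pmf (snd z)) \<beta> = draw_prob z \<beta>"
proof -
  have "(\<integral>\<^sup>+\<alpha>. ennreal (draw_prob z \<alpha>) \<partial>count_space UNIV) = ennreal (\<Sum>\<alpha>\<in>UNIV. draw_prob z \<alpha>)"
    using draw_prob_nonneg[OF z] by (simp add: nn_integral_count_space_finite)
  also have "(\<Sum>\<alpha>\<in>UNIV. draw_prob z \<alpha>) = (\<Sum>\<alpha>\<in>profiles. draw_prob z \<alpha>)"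
    by (rule sum.mono_neutral_right) (auto simp: draw_prob_outside[OF z])
  finally show ?thesis
    using draw_prob_sum[OF z] draw_prob_nonneg[OF z]
    unfolding prof_pmf_def draw_prob_def by (subst pmf_embed_pmf) auto
qed

lemma set_prof_pmf: assumes z: "z \<in> Z" shows "set_pmf (prof_pmf (snd z)) \<subseteq> profiles"
  using draw_prob_outside[OF z] by (auto simp: set_pmf_eq pmf_prof_pmf[OF z])

(* Agrees with step on the support of prof_pmf, but maps every profile into Z, so that the image
   measure below is a genuine measure on Zm A. *)
definition step_or_stay :: "('i,'a) state \<Rightarrow> ('i \<Rightarrow> 'a) \<Rightarrow> ('i,'a) state" where
  "step_or_stay z \<beta> = (if \<beta> \<in> profiles then step z \<beta> else z)"

lemma measurable_step_or_stay: "z \<in> Z \<Longrightarrow> step_or_stay z \<in> measure_pmf p \<rightarrow>\<^sub>M Zm A"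
  by (auto simp: step_or_stay_def intro: step_in_Z)

lemma Pker_eq: assumes z: "z \<in> Z"
  shows "Pker A u \<epsilon> z = distr (measure_pmf (prof_pmf (snd z))) (Zm A) (step_or_stay z)"
proof -
  let ?M = "measure_pmf (prof_pmf (snd z))"
  have "emeasure ?M (step z -` B \<inter> space ?M) = emeasure ?M (step_or_stay z -` B \<inter> space ?M)" for B
    by (rule emeasure_eq_AE) (use set_prof_pmf[OF z] in \<open>auto simp: AE_measure_pmf_iff step_or_stay_def\<close>)
  then show ?thesis unfolding Pker_def distr_def by simp
qed

lemma measurable_Pker: "Pker A u \<epsilon> \<in> Zm A \<rightarrow>\<^sub>M prob_algebra (Zm A)"
proof -
  have "(\<lambda>z. distr (measure_pmf (prof_pmf (snd z))) (Zm A) (step_or_stay z)) \<in> Zm A \<rightarrow>\<^sub>M prob_algebra (Zm A)"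
  proof (rule measurable_distr_pmf_finite[OF finite_profiles])
    show "(\<lambda>z. step_or_stay z \<beta>) \<in> Zm A \<rightarrow>\<^sub>M Zm A" if "\<beta> \<in> profiles" for \<beta>
      using that by (simp add: step_or_stay_def)
    show "(\<lambda>z. pmf (prof_pmf (snd z)) \<beta>) \<in> borel_measurable (Zm A)" for \<beta>
      by (rule measurable_cong[THEN iffD2, OF _ measurable_draw_prob]) (simp add: pmf_prof_pmf)
    show "step_or_stay z \<in> measure_pmf (prof_pmf (snd z)) \<rightarrow>\<^sub>M Zm A" if "z \<in> space (Zm A)" for z
      using that measurable_step_or_stay by simp
    show "set_pmf (prof_pmf (snd z)) \<subseteq> profiles" if "z \<in> space (Zm A)" for z
      using that set_prof_pmf by simp
  qed
  then show ?thesis by (rule measurable_cong[THEN iffD1, rotated]) (simp add: Pker_eq)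
qed

lemma prob_space_Pker: "z \<in> Z \<Longrightarrow> prob_space (Pker A u \<epsilon> z) \<and> sets (Pker A u \<epsilon> z) = sets (Zm A)"
  using measurable_space[OF measurable_Pker, of z] by (simp add: space_prob_algebra)

lemma nn_integral_Pker: assumes z: "z \<in> Z" and g: "g \<in> borel_measurable (Zm A)"
  shows "(\<integral>\<^sup>+y. g y \<partial>Pker A u \<epsilon> z) = (\<Sum>\<beta>\<in>profiles. g (step z \<beta>) * ennreal (draw_prob z \<beta>))"
  unfolding Pker_eq[OF z]
  by (simp add: nn_integral_distr_pmf_finite[OF measurable_step_or_stay[OF z] _ set_prof_pmf[OF z] g]
      step_or_stay_def pmf_prof_pmf[OF z])

lemma integral_Pker: assumes z: "z \<in> Z" and f: "f \<in> borel_measurable (Zm A)"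
  shows "(\<integral>y. f y \<partial>Pker A u \<epsilon> z) = P_op f z"
  unfolding Pker_eq[OF z] P_op_def
  by (simp add: integral_distr_pmf_finite[OF measurable_step_or_stay[OF z] _ set_prof_pmf[OF z] f]
      step_or_stay_def pmf_prof_pmf[OF z])

lemma emeasure_Pker_pure: assumes a: "\<alpha> \<in> profiles" and B: "B \<in> sets (Zm A)"
  shows "emeasure (Pker A u \<epsilon> (pure \<alpha>)) B = indicator B (pure \<alpha>)"
  using nn_integral_Pker[OF pure_in_Z[OF a], of "indicator B"] prob_space_Pker[OF pure_in_Z[OF a]] B a
  by (simp add: draw_prob_pure step_pure if_distrib cong: if_cong)

lemma measurable_Pstep: "Pstep A u \<epsilon> t \<in> Zm A \<rightarrow>\<^sub>M prob_algebra (Zm A)"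
proof (induction t)
  case 0
  show ?case using measurable_return_prob_space[of "Zm A"] by (simp add: Pstep.simps(1)[abs_def])
next
  case (Suc t)
  show ?case using measurable_bind_prob_space[OF Suc measurable_Pker]
    by (simp add: Pstep.simps(2)[abs_def])
qed

lemma integral_Pstep:
  assumes z: "z \<in> Z"
  shows "f \<in> borel_measurable (Zm A) \<Longrightarrow> (\<And>y. y \<in> Z \<Longrightarrow> \<bar>f y\<bar> \<le> B) \<Longrightarrow>
    (\<integral>y. f y \<partial>Pstep A u \<epsilon> t z) = (P_op ^^ t) f z"
proof (induction t arbitrary: f)
  case 0
  then show ?case using z by (simp add: integral_return)
next
  case (Suc t)
  have Pt: "prob_space (Pstep A u \<epsilon> t z)" "sets (Pstep A u \<epsilon> t z) = sets (Zm A)"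
    using measurable_space[OF measurable_Pstep, of z t] z by (auto simp: space_prob_algebra)
  have K: "Pker A u \<epsilon> \<in> Pstep A u \<epsilon> t z \<rightarrow>\<^sub>M subprob_algebra (Zm A)"
    using measurable_prob_algebraD[OF measurable_Pker] by (simp add: measurable_cong_sets[OF Pt(2) refl])
  have "(\<integral>y. f y \<partial>Pstep A u \<epsilon> (Suc t) z) = (\<integral>x. (\<integral>y. f y \<partial>Pker A u \<epsilon> x) \<partial>Pstep A u \<epsilon> t z)"
    unfolding Pstep.simps(2)
    by (rule integral_bind[OF Suc.prems(1) _ K, where B=B and B'=1])
       (use Suc.prems(2) Pt(1) prob_space_Pker sets_eq_imp_space_eq[OF Pt(2)] in
        \<open>auto intro: prob_space.finite_measure simp: prob_space.emeasure_space_1\<close>)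
  also have "\<dots> = (\<integral>x. P_op f x \<partial>Pstep A u \<epsilon> t z)"
    using sets_eq_imp_space_eq[OF Pt(2)] by (intro Bochner_Integration.integral_cong refl)
       (simp add: integral_Pker Suc.prems(1))
  also have "\<dots> = (P_op ^^ t) (P_op f) z"
  proof (rule Suc.IH)
    show "P_op f \<in> borel_measurable (Zm A)" using measurable_iter[OF Suc.prems(1), of 1] by simp
    show "\<bar>P_op f y\<bar> \<le> B" if "y \<in> Z" for y
      using op_abs[OF that, of f] op_upper[OF that, of "\<lambda>y. \<bar>f y\<bar>" B] Suc.prems(2) by force
  qed
  also have "\<dots> = (P_op ^^ Suc t) f z" by (simp add: funpow_Suc_right del: funpow.simps)
  finally show ?case .
qed

(* The value off profiles is irrelevant (absorb_pmf vanishes there); it only makes the map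
   measurable into Zm A. *)
definition pure_or_default :: "('i \<Rightarrow> 'a) \<Rightarrow> ('i,'a) state" where
  "pure_or_default \<beta> = pure (if \<beta> \<in> profiles then \<beta> else (SOME \<alpha>. \<alpha> \<in> profiles))"

definition absorb_pmf :: "('i,'a) state \<Rightarrow> ('i \<Rightarrow> 'a) pmf" where
  "absorb_pmf z = embed_pmf (\<lambda>\<beta>. if \<beta> \<in> profiles then absorb_prob \<beta> z else 0)"

definition limit_kernel :: "('i,'a) state \<Rightarrow> ('i,'a) state measure" where
  "limit_kernel z = distr (measure_pmf (absorb_pmf z)) (Zm A) pure_or_default"

lemma pure_or_default_in_Z: "pure_or_default \<beta> \<in> Z"
proof -
  have "(SOME \<alpha>. \<alpha> \<in> profiles) \<in> profiles" using profiles_ne some_in_eq by blast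
  then show ?thesis by (auto simp: pure_or_default_def intro: pure_in_Z)
qed

lemma measurable_pure_or_default: "pure_or_default \<in> measure_pmf p \<rightarrow>\<^sub>M Zm A"
  using pure_or_default_in_Z by simp

lemma pmf_absorb_pmf: assumes z: "z \<in> Z"
  shows "pmf (absorb_pmf z) \<beta> = (if \<beta> \<in> profiles then absorb_prob \<beta> z else 0)"
proof -
  have "(\<integral>\<^sup>+\<beta>. ennreal (if \<beta> \<in> profiles then absorb_prob \<beta> z else 0) \<partial>count_space UNIV)
      = ennreal (\<Sum>\<beta>\<in>UNIV. if \<beta> \<in> profiles then absorb_prob \<beta> z else 0)"
    using absorb_prob_nonneg[OF z] by (simp add: nn_integral_count_space_finite)
  also have "\<dots> = 1" using absorb_prob_sum[OF z] by (simp add: sum.If_cases)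
  finally show ?thesis
    using absorb_prob_nonneg[OF z] unfolding absorb_pmf_def by (subst pmf_embed_pmf) auto
qed

lemma set_absorb_pmf: "z \<in> Z \<Longrightarrow> set_pmf (absorb_pmf z) \<subseteq> profiles"
  by (auto simp: set_pmf_eq pmf_absorb_pmf split: if_splits)

lemma measurable_absorb_prob: "absorb_prob \<alpha> \<in> borel_measurable (Zm A)"
  by (rule borel_measurable_LIMSEQ_metric[where f="\<lambda>t. (P_op ^^ t) (\<lambda>y. draw_prob y \<alpha>)"])
     (auto intro: measurable_iter absorb_prob_tendsto)

lemma measurable_limit_kernel: "limit_kernel \<in> Zm A \<rightarrow>\<^sub>M prob_algebra (Zm A)"
  unfolding limit_kernel_def
proof (rule measurable_distr_pmf_finite[OF finite_profiles])
  show "(\<lambda>z. pmf (absorb_pmf z) \<beta>) \<in> borel_measurable (Zm A)" if "\<beta> \<in> profiles" for \<beta>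
    by (rule measurable_cong[THEN iffD2, OF _ measurable_absorb_prob]) (simp add: pmf_absorb_pmf that)
  show "(\<lambda>z. pure_or_default \<beta>) \<in> Zm A \<rightarrow>\<^sub>M Zm A" for \<beta>
    using pure_or_default_in_Z by simp
  show "set_pmf (absorb_pmf z) \<subseteq> profiles" if "z \<in> space (Zm A)" for z
    using that set_absorb_pmf by simp
qed (rule measurable_pure_or_default)

lemma prob_space_limit_kernel:
  "z \<in> Z \<Longrightarrow> prob_space (limit_kernel z) \<and> sets (limit_kernel z) = sets (Zm A)"
  using measurable_space[OF measurable_limit_kernel, of z] by (simp add: space_prob_algebra)

lemma integral_limit_kernel: assumes z: "z \<in> Z" and f: "f \<in> borel_measurable (Zm A)"
  shows "(\<integral>y. f y \<partial>limit_kernel z) = (\<Sum>\<alpha>\<in>profiles. f (pure \<alpha>) * absorb_prob \<alpha> z)"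
  unfolding limit_kernel_def
  by (simp add: integral_distr_pmf_finite[OF measurable_pure_or_default _ set_absorb_pmf[OF z] f]
      pure_or_default_def pmf_absorb_pmf[OF z] mult.commute)

lemma nn_integral_limit_kernel: assumes z: "z \<in> Z" and g: "g \<in> borel_measurable (Zm A)"
  shows "(\<integral>\<^sup>+y. g y \<partial>limit_kernel z) = (\<Sum>\<alpha>\<in>profiles. g (pure \<alpha>) * ennreal (absorb_prob \<alpha> z))"
  unfolding limit_kernel_def
  by (simp add: nn_integral_distr_pmf_finite[OF measurable_pure_or_default _ set_absorb_pmf[OF z] g]
      pure_or_default_def pmf_absorb_pmf[OF z])

lemma emeasure_limit_kernel_pure: assumes g: "\<gamma> \<in> profiles" and B: "B \<in> sets (Zm A)"
  shows "emeasure (limit_kernel (pure \<gamma>)) B = indicator B (pure \<gamma>)"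
  using nn_integral_limit_kernel[OF pure_in_Z[OF g], of "indicator B"]
    prob_space_limit_kernel[OF pure_in_Z[OF g]] B g
  by (simp add: absorb_prob_pure if_distrib cong: if_cong)

lemma invariant_limit_kernel:
  assumes z: "z \<in> Z" shows "invariant_prob (Zm A) (Pker A u \<epsilon>) (limit_kernel z)"
  unfolding invariant_prob_def
proof (intro conjI ballI)
  show "limit_kernel z \<in> space (prob_algebra (Zm A))"
    using measurable_space[OF measurable_limit_kernel, of z] z by simp
  fix B assume B: "B \<in> sets (Zm A)"
  have "(\<integral>\<^sup>+y. emeasure (Pker A u \<epsilon> y) B \<partial>limit_kernel z)
      = (\<Sum>\<beta>\<in>profiles. emeasure (Pker A u \<epsilon> (pure \<beta>)) B * ennreal (absorb_prob \<beta> z))"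
    by (rule nn_integral_limit_kernel[OF z])
       (rule measurable_emeasure_kernel[OF measurable_prob_algebraD[OF measurable_Pker] B])
  also have "\<dots> = (\<integral>\<^sup>+y. indicator B y \<partial>limit_kernel z)"
    using B by (simp add: nn_integral_limit_kernel[OF z] emeasure_Pker_pure)
  finally show "emeasure (limit_kernel z) B = (\<integral>\<^sup>+y. emeasure (Pker A u \<epsilon> y) B \<partial>limit_kernel z)"
    using B prob_space_limit_kernel[OF z] by simp
qed

lemma support_limit_kernel:
  assumes z: "z \<in> Z" shows "support_on Z (limit_kernel z) \<subseteq> pure_states A"
proof -
  have closed: "closedin (top_of_set Z) (pure ` profiles)"
    using pure_in_Z by (intro closed_subset finite_imp_closed finite_imageI) auto
  have "Z - pure ` profiles \<in> sets (Zm A)"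
    using sets_Zm_Int[of "- pure ` profiles"] by (simp add: Diff_eq finite_imp_closed borel_open open_Compl)
  then have "emeasure (limit_kernel z) (Z - pure ` profiles) = 0"
    using nn_integral_limit_kernel[OF z, of "indicator (Z - pure ` profiles)"] prob_space_limit_kernel[OF z]
    by simp
  then have "support_on Z (limit_kernel z) \<subseteq> pure ` profiles"
    unfolding support_on_def using closed by (intro Inter_lower) simp
  then show ?thesis using pure_states_eq by simp
qed

lemma kernel_apply_Pstep_converges:
  assumes f: "continuous_on Z f" and bdd: "bounded (f ` Z)"
  shows "(\<lambda>t. SUP z\<in>Z. \<bar>kernel_apply (Pstep A u \<epsilon> t) f z - kernel_apply limit_kernel f z\<bar>) \<longlonglongrightarrow> 0"
proof -
  obtain K where K: "\<And>y. y \<in> Z \<Longrightarrow> \<bar>f y\<bar> \<le> K" using bdd unfolding bounded_iff by auto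
  have f_meas: "f \<in> borel_measurable (Zm A)"
    unfolding Zm_def by (rule borel_measurable_continuous_on_restrict[OF f])
  have "kernel_apply (Pstep A u \<epsilon> t) f z - kernel_apply limit_kernel f z =
      (P_op ^^ t) f z - (\<Sum>\<alpha>\<in>profiles. f (pure \<alpha>) * absorb_prob \<alpha> z)" if "z \<in> Z" for t z
    by (simp add: kernel_apply_def integral_Pstep[OF that f_meas K] integral_limit_kernel[OF that f_meas])
  then show ?thesis
    using uniform_limit_SUP_abs_diff[OF uniform_limit_iter[OF f K]] pure_in_Z profiles_ne
    by (simp cong: SUP_cong) blast
qed

section \<open>Invariant measures\<close>

lemma sets_far: "far \<eta> \<in> sets (Zm A)"
proof -
  have "far \<eta> = Z \<inter> - (\<Union>\<alpha>\<in>profiles. {y. fst y = actvec \<alpha> \<and> defect \<alpha> y \<le> \<eta>})"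
    unfolding far_def near_def by auto
  moreover have "closed {y::('i,'a) state. fst y = actvec \<alpha> \<and> defect \<alpha> y \<le> \<eta>}" for \<alpha>
    unfolding defect_def by (intro closed_Collect_conj closed_Collect_eq closed_Collect_le continuous_intros)
  ultimately show ?thesis by (auto intro!: sets_Zm_Int borel_open open_Compl closed_UN)
qed

lemma snd_eq_actvec_if_defect_0:
  assumes y: "y \<in> Z" and d: "defect \<alpha> y \<le> 0" shows "snd y = actvec \<alpha>"
proof -
  have "defect \<alpha> y = 0" using d defect_nonneg[OF y, of \<alpha>] by simp
  then have one: "snd y $ i $ \<alpha> i = 1" for i
    unfolding defect_def using state_le_1[OF y] by (simp add: sum_nonneg_eq_0_iff)
  have "snd y $ i $ k = 0" if "k \<noteq> \<alpha> i" for i k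
  proof -
    have "(\<Sum>k\<in>UNIV - {\<alpha> i}. snd y $ i $ k) = 0"
      using state_sum[OF y, of i] one[of i] by (simp add: sum_diff1)
    then show ?thesis using state_nonneg[OF y] that by (simp add: sum_nonneg_eq_0_iff)
  qed
  then show ?thesis using one by (simp add: vec_eq_iff actvec_nth)
qed

lemma far_if_not_pure:
  assumes y: "y \<in> Z" and np: "y \<notin> pure ` profiles" shows "\<exists>k::nat. y \<in> far (1 / Suc k)"
proof -
  have "\<exists>\<eta>>0. \<forall>\<alpha>\<in>profiles. y \<notin> near \<alpha> \<eta>"
  proof (rule finite_ex_pos_common)
    fix \<alpha> assume a: "\<alpha> \<in> profiles"
    show "\<exists>\<eta>>0. y \<notin> near \<alpha> \<eta>"
    proof (cases "fst y = actvec \<alpha>")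
      case True
      have "\<not> defect \<alpha> y \<le> 0"
      proof
        assume "defect \<alpha> y \<le> 0"
        then have "y = pure \<alpha>"
          using snd_eq_actvec_if_defect_0[OF y] True unfolding pure_def by (metis prod.collapse)
        then show False using np a by auto
      qed
      then show ?thesis unfolding near_def by (intro exI[of _ "defect \<alpha> y / 2"]) auto
    qed (auto simp: near_def intro: exI[of _ 1])
  next
    fix \<alpha> d d' assume "y \<notin> near \<alpha> d" "0 < d'" "d' \<le> d"
    then show "y \<notin> near \<alpha> d'" using near_mono[of d' d \<alpha>] by auto
  qed simp
  then obtain \<eta> where \<eta>: "\<eta> > 0" "\<And>\<alpha>. \<alpha> \<in> profiles \<Longrightarrow> y \<notin> near \<alpha> \<eta>" by auto
  obtain k :: nat where "inverse (real (Suc k)) < \<eta>" using reals_Archimedean[OF \<eta>(1)] by blast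
  then have "y \<notin> near \<alpha> (1 / Suc k)" if "\<alpha> \<in> profiles" for \<alpha>
    using \<eta>(2)[OF that] near_mono[of "1 / Suc k" \<eta> \<alpha>] by (auto simp: inverse_eq_divide)
  then show ?thesis using y unfolding far_def by blast
qed

lemma nn_integral_Pker_real:
  assumes z: "z \<in> Z" and g: "g \<in> borel_measurable (Zm A)" and g0: "\<And>y. y \<in> Z \<Longrightarrow> 0 \<le> g y"
  shows "(\<integral>\<^sup>+y. ennreal (g y) \<partial>Pker A u \<epsilon> z) = ennreal (P_op g z)"
proof -
  have "(\<integral>\<^sup>+y. ennreal (g y) \<partial>Pker A u \<epsilon> z) =
      (\<Sum>\<beta>\<in>profiles. ennreal (g (step z \<beta>)) * ennreal (draw_prob z \<beta>))"
    by (rule nn_integral_Pker[OF z]) (use g in simp)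
  also have "\<dots> = (\<Sum>\<beta>\<in>profiles. ennreal (draw_prob z \<beta> * g (step z \<beta>)))"
    using g0 step_in_Z[OF z] draw_prob_nonneg[OF z]
    by (intro sum.cong refl) (simp add: ennreal_mult' mult.commute)
  also have "\<dots> = ennreal (P_op g z)"
    unfolding P_op_def using g0 step_in_Z[OF z] draw_prob_nonneg[OF z] by (intro sum_ennreal) auto
  finally show ?thesis .
qed

lemma nn_integral_iter_invariant:
  assumes \<mu>: "invariant_prob (Zm A) (Pker A u \<epsilon>) \<mu>"
    and g: "g \<in> borel_measurable (Zm A)" and g0: "\<And>y. y \<in> Z \<Longrightarrow> 0 \<le> g y"
  shows "(\<integral>\<^sup>+y. ennreal (g y) \<partial>\<mu>) = (\<integral>\<^sup>+y. ennreal ((P_op ^^ t) g y) \<partial>\<mu>)"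
proof (induction t)
  case (Suc t)
  have sets: "sets \<mu> = sets (Zm A)" using \<mu> unfolding invariant_prob_def by (simp add: space_prob_algebra)
  have "(\<integral>\<^sup>+y. ennreal ((P_op ^^ t) g y) \<partial>\<mu>) =
      (\<integral>\<^sup>+x. \<integral>\<^sup>+y. ennreal ((P_op ^^ t) g y) \<partial>Pker A u \<epsilon> x \<partial>\<mu>)"
    using measurable_iter[OF g, of t]
    by (intro invariant_prob_nn_integral[OF \<mu> measurable_prob_algebraD[OF measurable_Pker]]) simp
  also have "\<dots> = (\<integral>\<^sup>+x. ennreal ((P_op ^^ Suc t) g x) \<partial>\<mu>)"
  proof (rule nn_integral_cong)
    fix x assume "x \<in> space \<mu>"
    then have x: "x \<in> Z" using sets_eq_imp_space_eq[OF sets] by simp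
    have "\<And>y. y \<in> Z \<Longrightarrow> 0 \<le> (P_op ^^ t) g y" by (rule iter_lower[OF _ g0])
    then show "(\<integral>\<^sup>+y. ennreal ((P_op ^^ t) g y) \<partial>Pker A u \<epsilon> x) = ennreal ((P_op ^^ Suc t) g x)"
      using nn_integral_Pker_real[OF x measurable_iter[OF g]] by simp
  qed
  finally show ?case using Suc by simp
qed simp

lemma emeasure_far_invariant:
  assumes \<mu>: "invariant_prob (Zm A) (Pker A u \<epsilon>) \<mu>" and \<eta>: "0 < \<eta>"
  shows "emeasure \<mu> (far \<eta>) = 0"
proof -
  have sets: "sets \<mu> = sets (Zm A)" and prob: "prob_space \<mu>"
    using \<mu> unfolding invariant_prob_def by (auto simp: space_prob_algebra)
  have bound: "emeasure \<mu> (far \<eta>) \<le> 0 + ennreal e" if e: "0 < e" for e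
  proof -
    obtain T0 where "\<forall>t\<ge>T0. \<forall>z\<in>Z. (P_op ^^ t) (indicator (far \<eta>)) z \<le> e"
      using far_vanishes[OF \<eta> e] by blast
    then have T0: "\<And>z. z \<in> Z \<Longrightarrow> (P_op ^^ T0) (indicator (far \<eta>)) z \<le> e" by simp
    have "emeasure \<mu> (far \<eta>) = (\<integral>\<^sup>+y. ennreal (indicator (far \<eta>) y) \<partial>\<mu>)"
      using sets_far sets by (simp add: ennreal_indicator)
    also have "\<dots> = (\<integral>\<^sup>+y. ennreal ((P_op ^^ T0) (indicator (far \<eta>)) y) \<partial>\<mu>)"
      by (rule nn_integral_iter_invariant[OF \<mu> borel_measurable_indicator[OF sets_far]]) simp
    also have "\<dots> \<le> (\<integral>\<^sup>+y. ennreal e \<partial>\<mu>)"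
      using T0 sets_eq_imp_space_eq[OF sets] by (intro nn_integral_mono ennreal_leI) simp
    also have "\<dots> = ennreal e" using prob_space.emeasure_space_1[OF prob] by simp
    finally show ?thesis by simp
  qed
  have "emeasure \<mu> (far \<eta>) \<le> 0"
  proof (rule ennreal_le_epsilon)
    fix e :: real assume "0 < e"
    then show "emeasure \<mu> (far \<eta>) \<le> 0 + ennreal e" by (rule bound)
  qed
  then show ?thesis by simp
qed

lemma AE_pure_invariant:
  assumes \<mu>: "invariant_prob (Zm A) (Pker A u \<epsilon>) \<mu>"
  shows "AE z in \<mu>. z \<in> pure ` profiles"
proof -
  have sets: "sets \<mu> = sets (Zm A)" using \<mu> unfolding invariant_prob_def by (simp add: space_prob_algebra)
  have "AE y in \<mu>. y \<notin> far (1 / Suc k)" for k :: nat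
    using emeasure_far_invariant[OF \<mu>, of "1 / Suc k"] sets_far sets by (intro AE_not_in null_setsI) auto
  then have "AE y in \<mu>. \<forall>k::nat. y \<notin> far (1 / Suc k)" by (simp add: AE_all_countable)
  moreover have "AE y in \<mu>. y \<in> space \<mu>" by simp
  ultimately show ?thesis
  proof eventually_elim
    case (elim y)
    then show ?case using far_if_not_pure[of y] sets_eq_imp_space_eq[OF sets] by auto
  qed
qed

lemma invariant_prob_limit_kernel:
  assumes \<mu>: "invariant_prob (Zm A) (Pker A u \<epsilon>) \<mu>"
  shows "invariant_prob (Zm A) limit_kernel \<mu>"
  unfolding invariant_prob_def
proof (intro conjI ballI)
  show "\<mu> \<in> space (prob_algebra (Zm A))" using \<mu> unfolding invariant_prob_def by blast
  then have sets: "sets \<mu> = sets (Zm A)" by (simp add: space_prob_algebra)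
  fix B assume B: "B \<in> sets (Zm A)"
  have "AE z in \<mu>. emeasure (limit_kernel z) B = indicator B z"
    using AE_pure_invariant[OF \<mu>] by eventually_elim (auto simp: emeasure_limit_kernel_pure[OF _ B])
  then have "(\<integral>\<^sup>+z. emeasure (limit_kernel z) B \<partial>\<mu>) = (\<integral>\<^sup>+z. indicator B z \<partial>\<mu>)"
    by (rule nn_integral_cong_AE)
  then show "emeasure \<mu> B = (\<integral>\<^sup>+z. emeasure (limit_kernel z) B \<partial>\<mu>)" using B sets by simp
qed

end

theorem proposition4p2:
  fixes A :: "'i::finite \<Rightarrow> 'a::finite set"
    and u :: "'i \<Rightarrow> ('i \<Rightarrow> 'a) \<Rightarrow> real"
    and \<epsilon> :: real
    and \<mu> :: "('i,'a) state measure"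
  assumes A_ne: "\<And>i. A i \<noteq> {}"
    and u_pos: "\<And>i \<alpha>. (\<forall>j. \<alpha> j \<in> A j) \<Longrightarrow> 0 < u i \<alpha>"
    and eps_pos: "0 < \<epsilon>"
    and eps_small: "\<And>i \<alpha>. (\<forall>j. \<alpha> j \<in> A j) \<Longrightarrow> \<epsilon> * u i \<alpha> < 1"
    and mu_inv: "invariant_prob (Zm A) (Pker A u \<epsilon>) \<mu>"
  shows "\<exists>Pi_ker. Pi_ker \<in> Zm A \<rightarrow>\<^sub>M prob_algebra (Zm A)
     \<and> (AE z in \<mu>. invariant_prob (Zm A) (Pker A u \<epsilon>) (Pi_ker z))
     \<and> (\<forall>f. continuous_on (Zset A) f \<and> bounded (f ` Zset A) \<longrightarrow>
          (\<lambda>t. SUP z\<in>Zset A. \<bar>kernel_apply (Pstep A u \<epsilon> t) f z - kernel_apply Pi_ker f z\<bar>)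
            \<longlonglongrightarrow> 0)
     \<and> invariant_prob (Zm A) Pi_ker \<mu>
     \<and> (\<forall>z\<in>Zset A. support_on (Zset A) (Pi_ker z) \<subseteq> pure_states A)"
proof -
  interpret learning_dynamics A u \<epsilon> using A_ne u_pos eps_pos eps_small by unfold_locales
  have "space \<mu> = Zset A"
    using mu_inv sets_eq_imp_space_eq[of \<mu> "Zm A"] by (simp add: invariant_prob_def space_prob_algebra)
  then have "AE z in \<mu>. invariant_prob (Zm A) (Pker A u \<epsilon>) (limit_kernel z)"
    using invariant_limit_kernel by (intro AE_I2) simp
  then show ?thesis
    using measurable_limit_kernel kernel_apply_Pstep_converges invariant_prob_limit_kernel[OF mu_inv]
      support_limit_kernel
    by (intro exI[of _ limit_kernel]) blast
qed

end
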